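(* Let $\mathcal F$ be a class of measurable functions $\mathbb X\times\mathbb A\to\mathbb R$, and let $\mathcal A$ be an online algorithm producing estimates $\hat\mu_i(\mathbf O_{i-1}):\mathbb X\times\mathbb A\to\mathbb R$, $i\in[n]$, each depending measurably only on $\mathbf O_{i-1}$. For $\mu:\mathbb X\times\mathbb A\to\mathbb R$ define the losses $$l_i(\mu):=\frac{g^2(X_i,A_i)}{(\pi_i^* )^2(X_i,\mathbf O_{i-1};A_i)}\{Y_i-\mu(X_i,A_i)\}^2,$$ and the regret $\mathrm{Regret}(n,\mathcal F;\mathcal A):=\sum_{i=1}^n l_i(\hat\mu_i(\mathbf O_{i-1}))-\inf_{\mu\in\mathcal F}\sum_{i=1}^n l_i(\mu)$. Then the AIPW estimator $\hat\tau_n^{\mathrm{AIPW}}$ built from these estimates satisfies $$\mathbb E_{\mathcal I^*}\big[\{\hat\tau_n^{\mathrm{AIPW}}(\mathbf O_n)-\tau(\mathcal I^* )\}^2\big]\le\frac1n\Big(v_*^2+\frac1n\mathbb E_{\mathcal I^*}[\mathrm{Regret}(n,\mathcal F;\mathcal A)]+\inf_{\mu\in\mathcal F}\|\mu-\mu^*\|_{(n)}^2\Big).$$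
   Context: Setup. Let $(\mathbb X,\lambda_{\mathbb X})$, $(\mathbb A,\lambda_{\mathbb A})$, $(\mathbb Y,\lambda_{\mathbb Y})$ be measurable spaces with $\sigma$-finite measures, $\mathbb Y\subseteq\mathbb R$, and $\mathbb O:=\mathbb X\times\mathbb A\times\mathbb Y$. A problem instance is a pair $\mathcal I=(\Xi,\Gamma)$ where $\Xi$ is a probability measure on $\mathbb X$ and $\Gamma$ is a Markov kernel from $\mathbb X\times\mathbb A$ to $\mathbb Y$. For each $i\in[n]$ a known behavioral policy $\Pi_i^*$ is a Markov kernel from $\mathbb X\times\mathbb O^{i-1}$ to $\mathbb A$ with density $\pi_i^*(x,\mathbf o_{i-1};\cdot):=d\Pi_i^*(\cdot\mid x,\mathbf o_{i-1})/d\lambda_{\mathbb A}$. Under instance $\mathcal I$, data $\mathbf O_n=(X_1,A_1,Y_1,\dots,X_n,A_n,Y_n)$ are generated sequentially: for $i=1,\dots,n$, $X_i\sim\Xi$ independently of $\mathbf O_{i-1}$; $A_i\mid(X_i,\mathbf O_{i-1})\sim\Pi_i^*(\cdot\mid X_i,\mathbf O_{i-1})$; $Y_i\mid(X_i,A_i,\mathbf O_{i-1})\sim\Gamma(\cdot\mid X_i,A_i)$. Here $\mathbf O_i$ denotes the first $i$ triples ($\mathbf O_0=\varnothing$). $\mathbb E_{\mathcal I}$, $\mathrm{Var}_{\mathcal I}$ denote expectation/variance under this law. The true instance is $\mathcal I^*=(\Xi^*,\Gamma^* )$, with treatment effect $\mu^*(x,a):=\int y\,\Gamma^*(dy\mid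 x,a)$ and conditional variance $\sigma^2(x,a):=\int(y-\mu^*(x,a))^2\Gamma^*(dy\mid x,a)<\infty$. A measurable evaluation function $g:\mathbb X\times\mathbb A\to\mathbb R$ is given; $\langle f,h\rangle_{\lambda_{\mathbb A}}:=\int_{\mathbb A}f(a)h(a)\,d\lambda_{\mathbb A}(a)$. The target is $\tau(\mathcal I^* ):=\mathbb E_{X\sim\Xi^*}[\langle g(X,\cdot),\mu^*(X,\cdot)\rangle_{\lambda_{\mathbb A}}]$. For $\varphi:\mathbb X\times\mathbb A\to\mathbb R$ and $k\in[n]$, $\|\varphi\|_{(k)}^2:=\frac1k\sum_{i=1}^k\mathbb E_{\mathcal I^*}\big[g^2(X_i,A_i)\varphi^2(X_i,A_i)/(\pi_i^* )^2(X_i,\mathbf O_{i-1};A_i)\big]$. The efficient variance is $v_*^2:=\mathrm{Var}_{X\sim\Xi^*}[\langle g(X,\cdot),\mu^*(X,\cdot)\rangle_{\lambda_{\mathbb A}}]+\|\sigma\|_{(n)}^2$. AIPW estimator: $\hat\tau_n^{\mathrm{AIPW}}(\mathbf O_n):=\frac1n\sum_{i=1}^n\big[\frac{g(X_i,A_i)}{\pi_i^*(X_i,\mathbf O_{i-1};A_i)}\{Y_i-\hat\mu_i(\mathbf O_{i-1})(X_i,A_i)\}+\langle g(X_i,\cdot),\hat\mu_i(\mathbf O_{i-1})(X_i,\cdot)\rangle_{\lambda_{\mathbb A}}\big]$. All expectations appearing are assumed finite (and the infimum inside the regret measurable).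
   Formalization: Each behavioral policy density is also strictly positive wherever the evaluation function is nonzero: $\pi_i^*(x,\mathbf o_{i-1};a)>0$ whenever $g(x,a)\ne 0$, for every i, x, history and a. The statement above fails without it. *)

theory Defs
  imports "HOL-Probability.Probability"
begin

text \<open>Rounds are indexed 0-based: round i in {0..<n} corresponds to round i+1
of the paper. A history of the first i observations is an element of
PiM {..<i} of the observation space; a full data set is an element of PiM {..<n}.
The sigma-algebra on X is the one of the probability measure Xi; the measure on A is MA
(= lambda_A); responses are real with the Borel sigma-algebra.\<close>

type_synonym ('x, 'a) obs = "'x \<times> 'a \<times> real"
type_synonym ('x, 'a) hist = "nat \<Rightarrow> ('x, 'a) obs"

definition obsM :: "'x measure \<Rightarrow> 'a measure \<Rightarrow> ('x, 'a) obs measure" where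
  "obsM Xi MA = Xi \<Otimes>\<^sub>M (MA \<Otimes>\<^sub>M (borel :: real measure))"

definition histM :: "'x measure \<Rightarrow> 'a measure \<Rightarrow> nat \<Rightarrow> ('x, 'a) hist measure" where
  "histM Xi MA i = PiM {..<i} (\<lambda>_. obsM Xi MA)"

definition step_law :: "'x measure \<Rightarrow> 'a measure \<Rightarrow> ('x \<Rightarrow> 'a \<Rightarrow> real measure)
    \<Rightarrow> ('x \<Rightarrow> ('x, 'a) hist \<Rightarrow> 'a \<Rightarrow> real) \<Rightarrow> ('x, 'a) hist \<Rightarrow> ('x, 'a) obs measure" where
  "step_law Xi MA Gam p h =
     bind Xi (\<lambda>x. bind (density MA (\<lambda>a. ennreal (p x h a)))
       (\<lambda>a. bind (Gam x a) (\<lambda>y. return (obsM Xi MA) (x, a, y))))"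

fun data_law :: "'x measure \<Rightarrow> 'a measure \<Rightarrow> ('x \<Rightarrow> 'a \<Rightarrow> real measure)
    \<Rightarrow> (nat \<Rightarrow> 'x \<Rightarrow> ('x, 'a) hist \<Rightarrow> 'a \<Rightarrow> real) \<Rightarrow> nat \<Rightarrow> ('x, 'a) hist measure" where
  "data_law Xi MA Gam pol 0 = return (histM Xi MA 0) (\<lambda>_. undefined)"
| "data_law Xi MA Gam pol (Suc i) =
     bind (data_law Xi MA Gam pol i)
       (\<lambda>h. bind (step_law Xi MA Gam (pol i) h)
          (\<lambda>ob. return (histM Xi MA (Suc i)) (h(i := ob))))"

definition Xo :: "('x, 'a) hist \<Rightarrow> nat \<Rightarrow> 'x" where "Xo \<omega> i = fst (\<omega> i)"
definition Ao :: "('x, 'a) hist \<Rightarrow> nat \<Rightarrow> 'a" where "Ao \<omega> i = fst (snd (\<omega> i))"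
definition Yo :: "('x, 'a) hist \<Rightarrow> nat \<Rightarrow> real" where "Yo \<omega> i = snd (snd (\<omega> i))"
definition past :: "('x, 'a) hist \<Rightarrow> nat \<Rightarrow> ('x, 'a) hist" where
  "past \<omega> i = restrict \<omega> {..<i}"

definition mu_star :: "('x \<Rightarrow> 'a \<Rightarrow> real measure) \<Rightarrow> 'x \<Rightarrow> 'a \<Rightarrow> real" where
  "mu_star Gam x a = integral\<^sup>L (Gam x a) (\<lambda>y. y)"

definition sigma_fn :: "('x \<Rightarrow> 'a \<Rightarrow> real measure) \<Rightarrow> 'x \<Rightarrow> 'a \<Rightarrow> real" where
  "sigma_fn Gam x a = sqrt (integral\<^sup>L (Gam x a) (\<lambda>y. (y - mu_star Gam x a)\<^sup>2))"

definition innerA :: "'a measure \<Rightarrow> ('a \<Rightarrow> real) \<Rightarrow> ('a \<Rightarrow> real) \<Rightarrow> real" where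
  "innerA MA f h = integral\<^sup>L MA (\<lambda>a. f a * h a)"

definition tau :: "'x measure \<Rightarrow> 'a measure \<Rightarrow> ('x \<Rightarrow> 'a \<Rightarrow> real measure) \<Rightarrow> ('x \<Rightarrow> 'a \<Rightarrow> real) \<Rightarrow> real" where
  "tau Xi MA Gam g = integral\<^sup>L Xi (\<lambda>x. innerA MA (g x) (mu_star Gam x))"

definition wnorm2 :: "'x measure \<Rightarrow> 'a measure \<Rightarrow> ('x \<Rightarrow> 'a \<Rightarrow> real measure)
    \<Rightarrow> (nat \<Rightarrow> 'x \<Rightarrow> ('x, 'a) hist \<Rightarrow> 'a \<Rightarrow> real) \<Rightarrow> ('x \<Rightarrow> 'a \<Rightarrow> real) \<Rightarrow> nat
    \<Rightarrow> ('x \<Rightarrow> 'a \<Rightarrow> real) \<Rightarrow> real" where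
  "wnorm2 Xi MA Gam pol g k phi =
     (1 / real k) * (\<Sum>i<k. integral\<^sup>L (data_law Xi MA Gam pol k)
        (\<lambda>\<omega>. (g (Xo \<omega> i) (Ao \<omega> i))\<^sup>2 * (phi (Xo \<omega> i) (Ao \<omega> i))\<^sup>2
               / (pol i (Xo \<omega> i) (past \<omega> i) (Ao \<omega> i))\<^sup>2))"

definition eff_var :: "'x measure \<Rightarrow> 'a measure \<Rightarrow> ('x \<Rightarrow> 'a \<Rightarrow> real measure)
    \<Rightarrow> (nat \<Rightarrow> 'x \<Rightarrow> ('x, 'a) hist \<Rightarrow> 'a \<Rightarrow> real) \<Rightarrow> ('x \<Rightarrow> 'a \<Rightarrow> real) \<Rightarrow> nat \<Rightarrow> real" where
  "eff_var Xi MA Gam pol g n =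
     integral\<^sup>L Xi (\<lambda>x. (innerA MA (g x) (mu_star Gam x) - tau Xi MA Gam g)\<^sup>2)
     + wnorm2 Xi MA Gam pol g n (sigma_fn Gam)"

definition loss :: "(nat \<Rightarrow> 'x \<Rightarrow> ('x, 'a) hist \<Rightarrow> 'a \<Rightarrow> real) \<Rightarrow> ('x \<Rightarrow> 'a \<Rightarrow> real)
    \<Rightarrow> nat \<Rightarrow> ('x \<Rightarrow> 'a \<Rightarrow> real) \<Rightarrow> ('x, 'a) hist \<Rightarrow> real" where
  "loss pol g i mu \<omega> =
     (g (Xo \<omega> i) (Ao \<omega> i))\<^sup>2 / (pol i (Xo \<omega> i) (past \<omega> i) (Ao \<omega> i))\<^sup>2
       * (Yo \<omega> i - mu (Xo \<omega> i) (Ao \<omega> i))\<^sup>2"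

definition regret :: "(nat \<Rightarrow> 'x \<Rightarrow> ('x, 'a) hist \<Rightarrow> 'a \<Rightarrow> real) \<Rightarrow> ('x \<Rightarrow> 'a \<Rightarrow> real)
    \<Rightarrow> nat \<Rightarrow> ('x \<Rightarrow> 'a \<Rightarrow> real) set \<Rightarrow> (nat \<Rightarrow> ('x, 'a) hist \<Rightarrow> 'x \<Rightarrow> 'a \<Rightarrow> real)
    \<Rightarrow> ('x, 'a) hist \<Rightarrow> real" where
  "regret pol g n F muhat \<omega> =
     (\<Sum>i<n. loss pol g i (muhat i (past \<omega> i)) \<omega>)
     - (INF mu\<in>F. \<Sum>i<n. loss pol g i mu \<omega>)"

definition aipw :: "'a measure \<Rightarrow> (nat \<Rightarrow> 'x \<Rightarrow> ('x, 'a) hist \<Rightarrow> 'a \<Rightarrow> real) \<Rightarrow> ('x \<Rightarrow> 'a \<Rightarrow> real)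
    \<Rightarrow> nat \<Rightarrow> (nat \<Rightarrow> ('x, 'a) hist \<Rightarrow> 'x \<Rightarrow> 'a \<Rightarrow> real) \<Rightarrow> ('x, 'a) hist \<Rightarrow> real" where
  "aipw MA pol g n muhat \<omega> =
     (1 / real n) * (\<Sum>i<n.
        g (Xo \<omega> i) (Ao \<omega> i) / pol i (Xo \<omega> i) (past \<omega> i) (Ao \<omega> i)
          * (Yo \<omega> i - muhat i (past \<omega> i) (Xo \<omega> i) (Ao \<omega> i))
        + innerA MA (g (Xo \<omega> i)) (muhat i (past \<omega> i) (Xo \<omega> i)))"

end

theory Submission
  imports Defs
begin

text \<open>The estimation error of the AIPW estimator is the average of the scores
\<open>\<xi>\<^sub>i = g/\<pi>\<^sub>i (Y\<^sub>i - \<mu>\<^sub>i(X\<^sub>i,A\<^sub>i)) + \<langle>g, \<mu>\<^sub>i\<rangle> - \<tau>\<close>. Given the past, the response is unbiased for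
\<open>\<mu>\<^sup>*\<close> and the policy density integrates to one, so each score has conditional mean zero; hence the
cross terms of the squared error vanish and \<open>n\<^sup>2 E[err\<^sup>2] = \<Sum> E[\<xi>\<^sub>i\<^sup>2]\<close>. Conditionally on the past,
\<open>E[\<xi>\<^sub>i\<^sup>2]\<close> exceeds the second moment of the importance-weighted residual by at most the variance of
\<open>\<langle>g, \<mu>\<^sup>*\<rangle>\<close>, and that squared residual is exactly the loss \<open>l\<^sub>i(\<mu>\<^sub>i)\<close>. The total loss of the online
algorithm is its regret plus the best loss in hindsight, which is at most the total loss of any fixed
\<open>\<mu> \<in> F\<close>; and the expected loss of a fixed \<open>\<mu>\<close> splits into the noise term \<open>\<parallel>\<sigma>\<parallel>\<^sup>2\<close> and the bias
term \<open>\<parallel>\<mu> - \<mu>\<^sup>*\<parallel>\<^sup>2\<close>.\<close>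

lemma integral_bind_prob_kernel_nonneg:
  fixes f :: "'b \<Rightarrow> real"
  assumes N: "N \<in> M \<rightarrow>\<^sub>M prob_algebra K" and M: "prob_space M"
    and f[measurable]: "f \<in> borel_measurable K" and nonneg: "\<And>y. y \<in> space K \<Longrightarrow> 0 \<le> f y"
    and int: "integrable (M \<bind> N) f"
  shows "AE x in M. integrable (N x) f"
    and "integrable M (\<lambda>x. integral\<^sup>L (N x) f)"
    and "integral\<^sup>L (M \<bind> N) f = (\<integral>x. integral\<^sup>L (N x) f \<partial>M)"
proof -
  have Ns: "N \<in> M \<rightarrow>\<^sub>M subprob_algebra K" using N by (rule measurable_prob_algebraD)
  have space_N: "space (N x) = space K" if "x \<in> space M" for x
    using subprob_measurableD(1)[OF Ns that] .
  have "sets (M \<bind> N) = sets K"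
    using sets_bind[OF sets_kernel[OF Ns] prob_space.not_empty[OF M]] .
  then have space_bind: "space (M \<bind> N) = space K" by (rule sets_eq_imp_space_eq)
  have "(\<integral>\<^sup>+x. ennreal (f x) \<partial>(M \<bind> N)) = (\<integral>\<^sup>+x. \<integral>\<^sup>+y. ennreal (f y) \<partial>N x \<partial>M)"
    by (rule nn_integral_bind[OF _ Ns]) measurable
  moreover have "(\<integral>\<^sup>+x. ennreal (f x) \<partial>(M \<bind> N)) = ennreal (integral\<^sup>L (M \<bind> N) f)"
    using int nonneg space_bind by (intro nn_integral_eq_integral AE_I2) auto
  ultimately have outer_eq: "(\<integral>\<^sup>+x. \<integral>\<^sup>+y. ennreal (f y) \<partial>N x \<partial>M) = ennreal (integral\<^sup>L (M \<bind> N) f)"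
    by simp
  have inner_meas: "(\<lambda>x. \<integral>\<^sup>+y. ennreal (f y) \<partial>N x) \<in> borel_measurable M"
    by (rule measurable_compose[OF Ns nn_integral_measurable_subprob_algebra]) measurable
  have "AE x in M. (\<integral>\<^sup>+y. ennreal (f y) \<partial>N x) \<noteq> \<infinity>"
    using nn_integral_PInf_AE[OF inner_meas] outer_eq by simp
  moreover have "integrable (N x) f \<and> ennreal (integral\<^sup>L (N x) f) = (\<integral>\<^sup>+y. ennreal (f y) \<partial>N x)"
    if x: "x \<in> space M" and fin: "(\<integral>\<^sup>+y. ennreal (f y) \<partial>N x) \<noteq> \<infinity>" for x
  proof
    have "f \<in> borel_measurable (N x)"
      using measurable_cong_sets[OF sets_kernel[OF Ns x] refl] f by blast
    moreover have "(\<integral>\<^sup>+y. ennreal (norm (f y)) \<partial>N x) = (\<integral>\<^sup>+y. ennreal (f y) \<partial>N x)"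
      using nonneg space_N[OF x] by (intro nn_integral_cong) auto
    ultimately show int_x: "integrable (N x) f"
      using fin by (intro integrableI_bounded) (auto simp: top.not_eq_extremum)
    show "ennreal (integral\<^sup>L (N x) f) = (\<integral>\<^sup>+y. ennreal (f y) \<partial>N x)"
      using nonneg space_N[OF x] by (intro nn_integral_eq_integral[symmetric] int_x AE_I2) auto
  qed
  ultimately have AE_int: "AE x in M. integrable (N x) f
      \<and> ennreal (integral\<^sup>L (N x) f) = (\<integral>\<^sup>+y. ennreal (f y) \<partial>N x)"
    by (elim AE_mp) (auto intro!: AE_I2)
  then show "AE x in M. integrable (N x) f" by (auto elim: AE_mp)
  have inner_int_meas: "(\<lambda>x. integral\<^sup>L (N x) f) \<in> borel_measurable M"
    by (rule measurable_compose[OF Ns integral_measurable_subprob_algebra]) measurable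
  have inner_nonneg: "0 \<le> integral\<^sup>L (N x) f" if "x \<in> space M" for x
    using nonneg space_N[OF that] by (intro integral_nonneg_AE AE_I2) auto
  have nn_eq: "(\<integral>\<^sup>+x. ennreal (integral\<^sup>L (N x) f) \<partial>M) = ennreal (integral\<^sup>L (M \<bind> N) f)"
    using AE_int outer_eq by (subst nn_integral_cong_AE[where v="\<lambda>x. \<integral>\<^sup>+y. ennreal (f y) \<partial>N x"]) auto
  have AE_inner_nonneg: "AE x in M. 0 \<le> integral\<^sup>L (N x) f"
    by (rule AE_I2) (rule inner_nonneg)
  show int_inner: "integrable M (\<lambda>x. integral\<^sup>L (N x) f)"
    using nn_eq by (intro integrableI_nonneg[OF inner_int_meas AE_inner_nonneg]) simp
  have "ennreal (\<integral>x. integral\<^sup>L (N x) f \<partial>M) = ennreal (integral\<^sup>L (M \<bind> N) f)"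
    using nn_eq by (simp add: nn_integral_eq_integral[symmetric, OF int_inner AE_inner_nonneg])
  moreover have "0 \<le> integral\<^sup>L (M \<bind> N) f"
    using nonneg space_bind by (intro integral_nonneg_AE AE_I2) auto
  moreover have "0 \<le> (\<integral>x. integral\<^sup>L (N x) f \<partial>M)"
    by (rule integral_nonneg_AE[OF AE_inner_nonneg])
  ultimately show "integral\<^sup>L (M \<bind> N) f = (\<integral>x. integral\<^sup>L (N x) f \<partial>M)" by simp
qed

lemma integral_bind_prob_kernel:
  fixes f :: "'b \<Rightarrow> real"
  assumes N: "N \<in> M \<rightarrow>\<^sub>M prob_algebra K" and M: "prob_space M"
    and f[measurable]: "f \<in> borel_measurable K"
    and int: "integrable (M \<bind> N) f"
  shows "AE x in M. integrable (N x) f"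
    and "integrable M (\<lambda>x. integral\<^sup>L (N x) f)"
    and "integral\<^sup>L (M \<bind> N) f = (\<integral>x. integral\<^sup>L (N x) f \<partial>M)"
proof -
  define fp where "fp y = max 0 (f y)" for y
  define fn where "fn y = max 0 (- f y)" for y
  have f_split: "f = (\<lambda>y. fp y - fn y)" by (auto simp: fp_def fn_def)
  have [measurable]: "fp \<in> borel_measurable K" "fn \<in> borel_measurable K"
    unfolding fp_def fn_def by measurable
  have int_pos: "integrable (M \<bind> N) fp" and int_neg: "integrable (M \<bind> N) fn"
    unfolding fp_def fn_def using int by auto
  note pos = integral_bind_prob_kernel_nonneg[OF N M _ _ int_pos]
    and neg = integral_bind_prob_kernel_nonneg[OF N M _ _ int_neg]
  have pos': "AE x in M. integrable (N x) fp" "integrable M (\<lambda>x. integral\<^sup>L (N x) fp)"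
    "integral\<^sup>L (M \<bind> N) fp = (\<integral>x. integral\<^sup>L (N x) fp \<partial>M)"
    by (rule pos; simp add: fp_def)+
  have neg': "AE x in M. integrable (N x) fn" "integrable M (\<lambda>x. integral\<^sup>L (N x) fn)"
    "integral\<^sup>L (M \<bind> N) fn = (\<integral>x. integral\<^sup>L (N x) fn \<partial>M)"
    by (rule neg; simp add: fn_def)+
  show "AE x in M. integrable (N x) f"
    using pos'(1) neg'(1) by eventually_elim (simp add: f_split)
  have AE_split: "AE x in M. integral\<^sup>L (N x) fp - integral\<^sup>L (N x) fn = integral\<^sup>L (N x) f"
    using pos'(1) neg'(1) by eventually_elim (simp add: f_split)
  have inner_meas: "(\<lambda>x. integral\<^sup>L (N x) f) \<in> borel_measurable M"
    by (rule measurable_compose[OF measurable_prob_algebraD[OF N] integral_measurable_subprob_algebra])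
      measurable
  show "integrable M (\<lambda>x. integral\<^sup>L (N x) f)"
    using pos'(2) neg'(2) by (intro integrable_cong_AE_imp[OF _ inner_meas AE_split]) auto
  have "integral\<^sup>L (M \<bind> N) f = integral\<^sup>L (M \<bind> N) fp - integral\<^sup>L (M \<bind> N) fn"
    using int_pos int_neg by (simp add: f_split)
  also have "\<dots> = (\<integral>x. integral\<^sup>L (N x) fp - integral\<^sup>L (N x) fn \<partial>M)"
    using pos' neg' by simp
  also have "\<dots> = (\<integral>x. integral\<^sup>L (N x) f \<partial>M)"
    using pos'(2) neg'(2) by (intro integral_cong_AE[OF _ inner_meas AE_split]) auto
  finally show "integral\<^sup>L (M \<bind> N) f = (\<integral>x. integral\<^sup>L (N x) f \<partial>M)" .
qed

lemma density_prob_kernel: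
  fixes p :: "'w \<Rightarrow> 'a \<Rightarrow> real"
  assumes sf: "sigma_finite_measure MA"
    and p_meas: "(\<lambda>(w, a). p w a) \<in> borel_measurable (W \<Otimes>\<^sub>M MA)"
    and nonneg: "\<And>w a. w \<in> space W \<Longrightarrow> a \<in> space MA \<Longrightarrow> 0 \<le> p w a"
    and total: "\<And>w. w \<in> space W \<Longrightarrow> (\<integral>\<^sup>+a. ennreal (p w a) \<partial>MA) = 1"
  shows "(\<lambda>w. density MA (\<lambda>a. ennreal (p w a))) \<in> W \<rightarrow>\<^sub>M prob_algebra MA"
proof (rule measurable_prob_algebraI)
  have [measurable]: "(\<lambda>x. p (fst x) (snd x)) \<in> borel_measurable (W \<Otimes>\<^sub>M MA)"
    using p_meas by (simp add: split_beta')
  have emeasure_eq: "emeasure (density MA (\<lambda>a. ennreal (p w a))) A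
      = (\<integral>\<^sup>+a. ennreal (p w a) * indicator A a \<partial>MA)" if "w \<in> space W" "A \<in> sets MA" for w A
    using measurable_Pair2[OF p_meas that(1)] that(2) by (intro emeasure_density) auto
  show prob: "prob_space (density MA (\<lambda>a. ennreal (p w a)))" if "w \<in> space W" for w
  proof
    have "(\<integral>\<^sup>+a. ennreal (p w a) * indicator (space MA) a \<partial>MA) = 1"
      using total[OF that] by (subst nn_integral_cong[where v="\<lambda>a. ennreal (p w a)"]) auto
    then show "emeasure (density MA (\<lambda>a. ennreal (p w a))) (space (density MA (\<lambda>a. ennreal (p w a)))) = 1"
      using emeasure_eq[OF that] by simp
  qed
  show "(\<lambda>w. density MA (\<lambda>a. ennreal (p w a))) \<in> W \<rightarrow>\<^sub>M subprob_algebra MA"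
  proof (rule measurable_subprob_algebra)
    fix A assume [measurable]: "A \<in> sets MA"
    have "(\<lambda>w. \<integral>\<^sup>+a. ennreal (p w a) * indicator A a \<partial>MA) \<in> borel_measurable W"
      by (intro sigma_finite_measure.borel_measurable_nn_integral[OF sf]) measurable
    then show "(\<lambda>w. emeasure (density MA (\<lambda>a. ennreal (p w a))) A) \<in> borel_measurable W"
      by (subst measurable_cong) (auto simp: emeasure_eq)
  qed (auto intro: prob_space_imp_subprob_space prob)
qed

lemma measurable_uncurry_compose:
  assumes "(\<lambda>(x, a). f x a) \<in> N1 \<Otimes>\<^sub>M N2 \<rightarrow>\<^sub>M L" "u \<in> M \<rightarrow>\<^sub>M N1" "v \<in> M \<rightarrow>\<^sub>M N2"
  shows "(\<lambda>w. f (u w) (v w)) \<in> M \<rightarrow>\<^sub>M L"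
  using measurable_compose[OF measurable_Pair[OF assms(2,3)] assms(1)] by simp

lemma past_fun_upd_less: "i < j \<Longrightarrow> past (h(j := ob)) i = past h i"
  unfolding past_def by (auto simp: restrict_def fun_eq_iff)

lemma past_fun_upd_self: "h \<in> space (histM Xi MA i) \<Longrightarrow> past (h(i := ob)) i = h"
  unfolding past_def
  by (auto simp: restrict_def fun_eq_iff histM_def space_PiM PiE_def extensional_def)

lemma past_past: "i \<le> k \<Longrightarrow> past (past \<omega> k) i = past \<omega> i"
  unfolding past_def by (auto simp: restrict_def fun_eq_iff)

lemma past_apply: "i < k \<Longrightarrow> past \<omega> k i = \<omega> i"
  unfolding past_def by auto

lemma integrable_mult_of_square_integrable:
  fixes f h :: "'b \<Rightarrow> real"
  assumes "f \<in> borel_measurable M" "h \<in> borel_measurable M"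
    and "integrable M (\<lambda>x. (f x)\<^sup>2)" "integrable M (\<lambda>x. (h x)\<^sup>2)"
  shows "integrable M (\<lambda>x. f x * h x)"
proof (rule Bochner_Integration.integrable_bound)
  show "integrable M (\<lambda>x. (f x)\<^sup>2 + (h x)\<^sup>2)" using assms(3,4) by simp
  have "\<bar>u * v\<bar> \<le> u\<^sup>2 + v\<^sup>2" for u v :: real
  proof -
    have "2 * \<bar>u\<bar> * \<bar>v\<bar> \<le> u\<^sup>2 + v\<^sup>2" using sum_squares_bound[of "\<bar>u\<bar>" "\<bar>v\<bar>"] by simp
    moreover have "0 \<le> \<bar>u\<bar> * \<bar>v\<bar>" by simp
    ultimately show ?thesis unfolding abs_mult by linarith
  qed
  then show "AE x in M. norm (f x * h x) \<le> norm ((f x)\<^sup>2 + (h x)\<^sup>2)" by simp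
qed (use assms(1,2) in measurable)

lemma integral_square_sum_orthogonal:
  fixes f :: "'i \<Rightarrow> 'b \<Rightarrow> real"
  assumes I: "finite I"
    and int: "\<And>i j. i \<in> I \<Longrightarrow> j \<in> I \<Longrightarrow> integrable M (\<lambda>x. f i x * f j x)"
    and orth: "\<And>i j. i \<in> I \<Longrightarrow> j \<in> I \<Longrightarrow> i \<noteq> j \<Longrightarrow> (\<integral>x. f i x * f j x \<partial>M) = 0"
  shows "(\<integral>x. (\<Sum>i\<in>I. f i x)\<^sup>2 \<partial>M) = (\<Sum>i\<in>I. \<integral>x. (f i x)\<^sup>2 \<partial>M)"
proof -
  have "(\<integral>x. (\<Sum>i\<in>I. f i x)\<^sup>2 \<partial>M) = (\<integral>x. (\<Sum>i\<in>I. \<Sum>j\<in>I. f i x * f j x) \<partial>M)"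
    by (simp add: power2_eq_square sum_product)
  also have "\<dots> = (\<Sum>i\<in>I. \<Sum>j\<in>I. \<integral>x. f i x * f j x \<partial>M)"
    using int by (simp add: Bochner_Integration.integral_sum Bochner_Integration.integrable_sum)
  also have "\<dots> = (\<Sum>i\<in>I. \<integral>x. f i x * f i x \<partial>M)"
  proof (rule sum.cong[OF refl])
    fix i assume i: "i \<in> I"
    have "(\<Sum>j\<in>I. \<integral>x. f i x * f j x \<partial>M)
        = (\<integral>x. f i x * f i x \<partial>M) + (\<Sum>j\<in>I - {i}. \<integral>x. f i x * f j x \<partial>M)"
      by (rule sum.remove[OF I i])
    also have "(\<Sum>j\<in>I - {i}. \<integral>x. f i x * f j x \<partial>M) = 0"
      using orth i by (intro sum.neutral) auto
    finally show "(\<Sum>j\<in>I. \<integral>x. f i x * f j x \<partial>M) = (\<integral>x. f i x * f i x \<partial>M)" by simp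
  qed
  finally show ?thesis by (simp add: power2_eq_square)
qed

locale adaptive_design =
  fixes Xi :: "'x measure" and MA :: "'a measure"
    and Gam :: "'x \<Rightarrow> 'a \<Rightarrow> real measure"
    and pol :: "nat \<Rightarrow> 'x \<Rightarrow> ('x, 'a) hist \<Rightarrow> 'a \<Rightarrow> real"
    and g :: "'x \<Rightarrow> 'a \<Rightarrow> real"
    and n :: nat
  assumes n_pos: "0 < n" and Xi_prob: "prob_space Xi"
    and MA_sf: "sigma_finite_measure MA"
    and Gam_kernel: "(\<lambda>(x, a). Gam x a) \<in> Xi \<Otimes>\<^sub>M MA \<rightarrow>\<^sub>M prob_algebra (borel :: real measure)"
    and Gam_var: "\<And>x a. x \<in> space Xi \<Longrightarrow> a \<in> space MA \<Longrightarrow> integrable (Gam x a) (\<lambda>y. y\<^sup>2)"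
    and pi_meas: "\<And>i. i < n \<Longrightarrow>
       (\<lambda>(x, h, a). pol i x h a) \<in> Xi \<Otimes>\<^sub>M (histM Xi MA i \<Otimes>\<^sub>M MA) \<rightarrow>\<^sub>M borel"
    and pi_nonneg: "\<And>i x h a. i < n \<Longrightarrow> x \<in> space Xi \<Longrightarrow> h \<in> space (histM Xi MA i)
       \<Longrightarrow> a \<in> space MA \<Longrightarrow> 0 \<le> pol i x h a"
    and pi_dens: "\<And>i x h. i < n \<Longrightarrow> x \<in> space Xi \<Longrightarrow> h \<in> space (histM Xi MA i)
       \<Longrightarrow> (\<integral>\<^sup>+ a. ennreal (pol i x h a) \<partial>MA) = 1"
    and overlap: "\<And>i x h a. i < n \<Longrightarrow> x \<in> space Xi \<Longrightarrow> h \<in> space (histM Xi MA i)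
       \<Longrightarrow> a \<in> space MA \<Longrightarrow> g x a \<noteq> 0 \<Longrightarrow> 0 < pol i x h a"
    and g_meas: "(\<lambda>(x, a). g x a) \<in> borel_measurable (Xi \<Otimes>\<^sub>M MA)"
begin

abbreviation "Hist \<equiv> histM Xi MA"
abbreviation "Obs \<equiv> obsM Xi MA"
abbreviation "Step i \<equiv> step_law Xi MA Gam (pol i)"
abbreviation "Data \<equiv> data_law Xi MA Gam pol"

declare data_law.simps(2)[simp del]

lemma Gam_measurable[measurable (raw)]:
  "f \<in> M \<rightarrow>\<^sub>M Xi \<Longrightarrow> k \<in> M \<rightarrow>\<^sub>M MA \<Longrightarrow> (\<lambda>w. Gam (f w) (k w)) \<in> M \<rightarrow>\<^sub>M prob_algebra borel"
  by (rule measurable_uncurry_compose[OF Gam_kernel])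

lemma g_measurable[measurable (raw)]:
  "f \<in> M \<rightarrow>\<^sub>M Xi \<Longrightarrow> k \<in> M \<rightarrow>\<^sub>M MA \<Longrightarrow> (\<lambda>w. g (f w) (k w)) \<in> borel_measurable M"
  by (rule measurable_uncurry_compose[OF g_meas])

lemma pol_measurable:
  assumes "i < n" "f \<in> M \<rightarrow>\<^sub>M Xi" "h \<in> M \<rightarrow>\<^sub>M Hist i" "k \<in> M \<rightarrow>\<^sub>M MA"
  shows "(\<lambda>w. pol i (f w) (h w) (k w)) \<in> borel_measurable M"
  using measurable_uncurry_compose[OF pi_meas[OF assms(1)] assms(2) measurable_Pair[OF assms(3,4)]]
  by simp

lemma Gam_prob_algebra: "x \<in> space Xi \<Longrightarrow> a \<in> space MA \<Longrightarrow> Gam x a \<in> space (prob_algebra borel)"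
  using measurable_space[OF Gam_kernel, of "(x, a)"] by (simp add: space_pair_measure)

lemma sets_Gam: "x \<in> space Xi \<Longrightarrow> a \<in> space MA \<Longrightarrow> sets (Gam x a) = sets borel"
  using Gam_prob_algebra by (simp add: space_prob_algebra)

lemma prob_space_Gam: "x \<in> space Xi \<Longrightarrow> a \<in> space MA \<Longrightarrow> prob_space (Gam x a)"
  using Gam_prob_algebra by (simp add: space_prob_algebra)

lemma space_obsM: "space Obs = space Xi \<times> space MA \<times> UNIV"
  by (simp add: obsM_def space_pair_measure)

lemma space_Hist_0: "(\<lambda>_. undefined) \<in> space (Hist 0)"
  by (simp add: histM_def space_PiM)

lemma space_MA_nonempty: "space MA \<noteq> {}"
proof
  assume "space MA = {}"
  moreover obtain x where "x \<in> space Xi" using prob_space.not_empty[OF Xi_prob] by blast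
  then have "(\<integral>\<^sup>+ a. ennreal (pol 0 x (\<lambda>_. undefined) a) \<partial>MA) = 1"
    using pi_dens[OF n_pos _ space_Hist_0] by simp
  ultimately show False by (simp add: nn_integral_empty)
qed

lemma space_Hist_nonempty: "space (Hist i) \<noteq> {}"
  using space_MA_nonempty prob_space.not_empty[OF Xi_prob] by (auto simp: histM_def space_obsM)

subsection \<open>The sampling kernels\<close>

definition response_kernel :: "'x \<Rightarrow> 'a \<Rightarrow> ('x, 'a) obs measure" where
  "response_kernel x a = Gam x a \<bind> (\<lambda>y. return Obs (x, a, y))"

definition action_kernel :: "nat \<Rightarrow> ('x, 'a) hist \<Rightarrow> 'x \<Rightarrow> ('x, 'a) obs measure" where
  "action_kernel i h x = density MA (\<lambda>a. ennreal (pol i x h a)) \<bind> response_kernel x"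

lemma step_law_eq_bind: "Step i h = Xi \<bind> action_kernel i h"
  unfolding step_law_def action_kernel_def response_kernel_def ..

lemma response_kernel_measurable: "(\<lambda>(x, a). response_kernel x a) \<in> Xi \<Otimes>\<^sub>M MA \<rightarrow>\<^sub>M prob_algebra Obs"
  unfolding response_kernel_def obsM_def by measurable

lemma measurable_obs_at:
  "x \<in> space Xi \<Longrightarrow> a \<in> space MA \<Longrightarrow> (\<lambda>y. (x, a, y)) \<in> Gam x a \<rightarrow>\<^sub>M Obs"
  unfolding measurable_cong_sets[OF sets_Gam refl] obsM_def
  by (intro measurable_Pair measurable_const measurable_ident_sets refl)

lemma response_kernel_eq_distr:
  "x \<in> space Xi \<Longrightarrow> a \<in> space MA \<Longrightarrow> response_kernel x a = distr (Gam x a) Obs (\<lambda>y. (x, a, y))"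
  unfolding response_kernel_def
  by (intro bind_return_distr' measurable_obs_at prob_space.not_empty prob_space_Gam)

lemma integral_response_kernel:
  fixes F :: "('x, 'a) obs \<Rightarrow> real"
  assumes x: "x \<in> space Xi" and a: "a \<in> space MA" and F: "F \<in> borel_measurable Obs"
  shows "integral\<^sup>L (response_kernel x a) F = (\<integral>y. F (x, a, y) \<partial>Gam x a)"
  using integral_distr[OF measurable_obs_at[OF x a] F] by (simp add: response_kernel_eq_distr[OF x a])

lemma policy_density_prob_kernel:
  assumes i: "i < n"
  shows "(\<lambda>(h, x). density MA (\<lambda>a. ennreal (pol i x h a))) \<in> Hist i \<Otimes>\<^sub>M Xi \<rightarrow>\<^sub>M prob_algebra MA"
proof -
  note [measurable (raw)] = pol_measurable[OF i]
  have "(\<lambda>w. density MA (\<lambda>a. ennreal (pol i (snd w) (fst w) a))) \<in> Hist i \<Otimes>\<^sub>M Xi \<rightarrow>\<^sub>M prob_algebra MA"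
    by (rule density_prob_kernel[OF MA_sf])
      (auto simp: space_pair_measure intro!: pi_nonneg[OF i] pi_dens[OF i])
  then show ?thesis by (simp add: split_beta')
qed

lemma action_kernel_measurable:
  assumes i: "i < n"
  shows "(\<lambda>(h, x). action_kernel i h x) \<in> Hist i \<Otimes>\<^sub>M Xi \<rightarrow>\<^sub>M prob_algebra Obs"
proof -
  have "(\<lambda>w. response_kernel (snd (fst w)) (snd w)) \<in> (Hist i \<Otimes>\<^sub>M Xi) \<Otimes>\<^sub>M MA \<rightarrow>\<^sub>M prob_algebra Obs"
    by (rule measurable_uncurry_compose[OF response_kernel_measurable]) measurable
  then have "(\<lambda>(w, a). response_kernel (snd w) a) \<in> (Hist i \<Otimes>\<^sub>M Xi) \<Otimes>\<^sub>M MA \<rightarrow>\<^sub>M prob_algebra Obs"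
    by (simp add: split_beta')
  from measurable_bind_prob_space2[OF policy_density_prob_kernel[OF i] this]
  show ?thesis unfolding action_kernel_def by (simp add: split_beta')
qed

lemma step_law_prob_kernel:
  assumes i: "i < n"
  shows "Step i \<in> Hist i \<rightarrow>\<^sub>M prob_algebra Obs"
proof -
  have "(\<lambda>h. Xi) \<in> Hist i \<rightarrow>\<^sub>M prob_algebra Xi"
    using Xi_prob by (intro measurable_const) (simp add: space_prob_algebra)
  from measurable_bind_prob_space2[OF this action_kernel_measurable[OF i]]
  show ?thesis by (simp add: step_law_eq_bind[abs_def])
qed

lemma
  assumes "i < n" "h \<in> space (Hist i)"
  shows sets_Step: "sets (Step i h) = sets Obs"
    and prob_space_Step: "prob_space (Step i h)"
  using measurable_space[OF step_law_prob_kernel[OF assms(1)] assms(2)] by (auto simp: space_prob_algebra)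

subsection \<open>The law of the data\<close>

lemma measurable_fun_upd_Hist: "h \<in> space (Hist k) \<Longrightarrow> (\<lambda>ob. h(k := ob)) \<in> Obs \<rightarrow>\<^sub>M Hist (Suc k)"
  using measurable_component_update[of h "{..<k}" "\<lambda>_. Obs" k]
  by (simp add: histM_def lessThan_Suc)

lemma measurable_fun_upd_Hist_pair[measurable]:
  "(\<lambda>(h, ob). h(k := ob)) \<in> Hist k \<Otimes>\<^sub>M Obs \<rightarrow>\<^sub>M Hist (Suc k)"
  using measurable_add_dim[of k "{..<k}" "\<lambda>_. Obs"] by (simp add: histM_def lessThan_Suc)

lemma measurable_fun_upd_Step:
  "i < n \<Longrightarrow> h \<in> space (Hist i) \<Longrightarrow> (\<lambda>ob. h(i := ob)) \<in> Step i h \<rightarrow>\<^sub>M Hist (Suc i)"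
  using measurable_fun_upd_Hist measurable_cong_sets[OF sets_Step refl] by blast

lemma measurable_past: "i \<le> k \<Longrightarrow> (\<lambda>\<omega>. past \<omega> i) \<in> Hist k \<rightarrow>\<^sub>M Hist i"
  unfolding past_def histM_def by (intro measurable_restrict_subset) auto

definition extend_kernel :: "nat \<Rightarrow> ('x, 'a) hist \<Rightarrow> ('x, 'a) hist measure" where
  "extend_kernel k h = distr (Step k h) (Hist (Suc k)) (\<lambda>ob. h(k := ob))"

lemma extend_kernel_measurable: "k < n \<Longrightarrow> extend_kernel k \<in> Hist k \<rightarrow>\<^sub>M prob_algebra (Hist (Suc k))"
  unfolding extend_kernel_def
  by (rule measurable_distr_prob_space2[OF step_law_prob_kernel measurable_fun_upd_Hist_pair])

lemma data_law_Suc_extend: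
  assumes k: "k < n" and space_k: "space (Data k) = space (Hist k)"
  shows "Data (Suc k) = Data k \<bind> extend_kernel k"
proof -
  have "Step k h \<bind> (\<lambda>ob. return (Hist (Suc k)) (h(k := ob))) = extend_kernel k h"
    if "h \<in> space (Data k)" for h
    using that space_k prob_space.not_empty[OF prob_space_Step[OF k]]
    unfolding extend_kernel_def by (intro bind_return_distr' measurable_fun_upd_Step[OF k]) auto
  then show ?thesis unfolding data_law.simps by (intro bind_cong_All ballI)
qed

lemma data_law_prob_algebra: "k \<le> n \<Longrightarrow> Data k \<in> space (prob_algebra (Hist k))"
proof (induction k)
  case 0
  then show ?case using space_Hist_0 by (simp add: space_prob_algebra prob_space_return)
next
  case (Suc k)
  then have k: "k < n" and Dk: "Data k \<in> space (prob_algebra (Hist k))" by simp_all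
  then have space_k: "space (Data k) = space (Hist k)"
    by (intro sets_eq_imp_space_eq) (simp add: space_prob_algebra)
  show ?case
    unfolding data_law_Suc_extend[OF k space_k] space_prob_algebra
    using sets_bind'[OF Dk extend_kernel_measurable[OF k]] prob_space_bind'[OF Dk extend_kernel_measurable[OF k]]
    by simp
qed

lemma
  assumes "k \<le> n"
  shows sets_Data: "sets (Data k) = sets (Hist k)"
    and space_Data: "space (Data k) = space (Hist k)"
    and prob_space_Data: "prob_space (Data k)"
    and measurable_Data_iff: "Data k \<rightarrow>\<^sub>M N = Hist k \<rightarrow>\<^sub>M N"
  using data_law_prob_algebra[OF assms] sets_eq_imp_space_eq measurable_cong_sets
  by (auto simp: space_prob_algebra)

lemma data_law_Suc: "k < n \<Longrightarrow> Data (Suc k) = Data k \<bind> extend_kernel k"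
  by (rule data_law_Suc_extend) (simp_all add: space_Data)

lemma distr_extend_kernel_past:
  assumes km: "k \<le> m" and m: "m < n" and h: "h \<in> space (Hist m)"
  shows "distr (extend_kernel m h) (Hist k) (\<lambda>\<omega>. past \<omega> k) = return (Hist k) (past h k)"
proof -
  interpret prob_space "Step m h" by (rule prob_space_Step[OF m h])
  have "distr (extend_kernel m h) (Hist k) (\<lambda>\<omega>. past \<omega> k)
      = distr (Step m h) (Hist k) ((\<lambda>\<omega>. past \<omega> k) \<circ> (\<lambda>ob. h(m := ob)))"
    unfolding extend_kernel_def using km
    by (intro distr_distr measurable_past measurable_fun_upd_Step[OF m h]) simp
  also have "\<dots> = distr (Step m h) (Hist k) (\<lambda>_. past h k)"
    using km by (intro distr_cong) (auto simp: past_def restrict_def fun_eq_iff)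
  also have "\<dots> = return (Hist k) (past h k)"
    using km h by (intro distr_const measurable_space[OF measurable_past]) auto
  finally show ?thesis .
qed

lemma distr_data_law_past: "k \<le> m \<Longrightarrow> m \<le> n \<Longrightarrow> distr (Data m) (Hist k) (\<lambda>\<omega>. past \<omega> k) = Data k"
proof (induction m)
  case 0
  then show ?case
    using space_Hist_0 by (simp add: distr_return measurable_past past_def histM_def)
next
  case (Suc m)
  show ?case
  proof (cases "k = Suc m")
    case True
    have "distr (Data k) (Hist k) (\<lambda>\<omega>. past \<omega> k) = distr (Data k) (Data k) (\<lambda>\<omega>. \<omega>)"
      using Suc.prems True
      by (intro distr_cong) (auto simp: sets_Data space_Data past_def histM_def space_PiM PiE_def extensional_def)
    then show ?thesis using True by simp
  next
    case False
    then have km: "k \<le> m" and m: "m < n" using Suc.prems by auto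
    have "distr (Data (Suc m)) (Hist k) (\<lambda>\<omega>. past \<omega> k)
        = Data m \<bind> (\<lambda>h. distr (extend_kernel m h) (Hist k) (\<lambda>\<omega>. past \<omega> k))"
      unfolding data_law_Suc[OF m] using m km space_Hist_nonempty
      by (intro distr_bind)
        (auto simp: measurable_Data_iff space_Data
          intro!: measurable_past intro: measurable_prob_algebraD extend_kernel_measurable)
    also have "\<dots> = Data m \<bind> (\<lambda>h. return (Hist k) (past h k))"
      using m by (intro bind_cong_All) (simp add: space_Data distr_extend_kernel_past[OF km m])
    also have "\<dots> = distr (Data m) (Hist k) (\<lambda>\<omega>. past \<omega> k)"
      using m km space_Hist_nonempty
      by (intro bind_return_distr') (auto simp: space_Data measurable_Data_iff intro!: measurable_past)
    finally show ?thesis using Suc.IH km m by simp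
  qed
qed

lemma integral_data_law_step:
  fixes F :: "('x, 'a) hist \<Rightarrow> real"
  assumes i: "i < n" and F: "F \<in> borel_measurable (Hist (Suc i))"
    and F_past: "\<And>\<omega>. F (past \<omega> (Suc i)) = F \<omega>"
    and int: "integrable (Data n) F"
  shows "AE h in Data i. integrable (Step i h) (\<lambda>ob. F (h(i := ob)))"
    and "integrable (Data i) (\<lambda>h. \<integral>ob. F (h(i := ob)) \<partial>Step i h)"
    and "integral\<^sup>L (Data n) F = (\<integral>h. (\<integral>ob. F (h(i := ob)) \<partial>Step i h) \<partial>Data i)"
proof -
  have past_meas: "(\<lambda>\<omega>. past \<omega> (Suc i)) \<in> Data n \<rightarrow>\<^sub>M Hist (Suc i)"
    using i by (simp add: measurable_Data_iff measurable_past)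
  have marginal: "distr (Data n) (Hist (Suc i)) (\<lambda>\<omega>. past \<omega> (Suc i)) = Data (Suc i)"
    using i by (intro distr_data_law_past) auto
  have int_Suc: "integrable (Data i \<bind> extend_kernel i) F"
    using int integrable_distr_eq[OF past_meas F] marginal by (simp add: F_past data_law_Suc[OF i])
  have integral_Suc: "integral\<^sup>L (Data n) F = integral\<^sup>L (Data i \<bind> extend_kernel i) F"
    using integral_distr[OF past_meas F] marginal by (simp add: F_past data_law_Suc[OF i])
  have extend_Data: "extend_kernel i \<in> Data i \<rightarrow>\<^sub>M prob_algebra (Hist (Suc i))"
    using i extend_kernel_measurable by (simp add: measurable_Data_iff)
  note bind = integral_bind_prob_kernel[OF extend_Data prob_space_Data[OF less_imp_le[OF i]] F int_Suc]
  have integrable_eq: "integrable (extend_kernel i h) F = integrable (Step i h) (\<lambda>ob. F (h(i := ob)))"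
    and integral_eq: "integral\<^sup>L (extend_kernel i h) F = (\<integral>ob. F (h(i := ob)) \<partial>Step i h)"
    if "h \<in> space (Data i)" for h
    unfolding extend_kernel_def using that i
    by (auto simp: space_Data intro!: integrable_distr_eq integral_distr measurable_fun_upd_Step F)
  show "AE h in Data i. integrable (Step i h) (\<lambda>ob. F (h(i := ob)))"
    using bind(1) by (elim AE_mp) (auto intro!: AE_I2 simp: integrable_eq)
  show "integrable (Data i) (\<lambda>h. \<integral>ob. F (h(i := ob)) \<partial>Step i h)"
    using bind(2) by (rule Bochner_Integration.integrable_cong[THEN iffD1, OF refl integral_eq, rotated])
  show "integral\<^sup>L (Data n) F = (\<integral>h. (\<integral>ob. F (h(i := ob)) \<partial>Step i h) \<partial>Data i)"
    using integral_Suc bind(3) by (simp cong: Bochner_Integration.integral_cong add: integral_eq)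
qed

lemma integral_data_law_le_step:
  fixes F G :: "('x, 'a) hist \<Rightarrow> real"
  assumes i: "i < n"
    and F: "F \<in> borel_measurable (Hist (Suc i))" "\<And>\<omega>. F (past \<omega> (Suc i)) = F \<omega>" "integrable (Data n) F"
    and G: "G \<in> borel_measurable (Hist (Suc i))" "\<And>\<omega>. G (past \<omega> (Suc i)) = G \<omega>" "integrable (Data n) G"
    and step: "\<And>h. h \<in> space (Hist i) \<Longrightarrow> integrable (Step i h) (\<lambda>ob. F (h(i := ob)))
      \<Longrightarrow> integrable (Step i h) (\<lambda>ob. G (h(i := ob)))
      \<Longrightarrow> (\<integral>ob. F (h(i := ob)) \<partial>Step i h) \<le> (\<integral>ob. G (h(i := ob)) \<partial>Step i h) + c"
  shows "integral\<^sup>L (Data n) F \<le> integral\<^sup>L (Data n) G + c"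
proof -
  interpret Di: prob_space "Data i" using prob_space_Data i by simp
  note F_step = integral_data_law_step[OF i F] and G_step = integral_data_law_step[OF i G]
  have "integral\<^sup>L (Data n) F = (\<integral>h. (\<integral>ob. F (h(i := ob)) \<partial>Step i h) \<partial>Data i)"
    by (rule F_step(3))
  also have "\<dots> \<le> (\<integral>h. (\<integral>ob. G (h(i := ob)) \<partial>Step i h) + c \<partial>Data i)"
  proof (rule integral_mono_AE)
    have "AE h in Data i. integrable (Step i h) (\<lambda>ob. F (h(i := ob)))
        \<and> integrable (Step i h) (\<lambda>ob. G (h(i := ob)))"
      using F_step(1) G_step(1) by eventually_elim simp
    then show "AE h in Data i. (\<integral>ob. F (h(i := ob)) \<partial>Step i h) \<le> (\<integral>ob. G (h(i := ob)) \<partial>Step i h) + c"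
      using i by (elim AE_mp) (auto intro!: AE_I2 step simp: space_Data)
  qed (use F_step(2) G_step(2) in auto)
  also have "\<dots> = integral\<^sup>L (Data n) G + c"
    using G_step(2,3) by (simp add: Di.prob_space)
  finally show ?thesis .
qed

subsection \<open>One round of the experiment\<close>

lemma measurable_obs_component: "i < k \<Longrightarrow> (\<lambda>\<omega>. \<omega> i) \<in> Hist k \<rightarrow>\<^sub>M Obs"
  unfolding histM_def by (intro measurable_component_singleton) auto

lemma
  assumes "i < k"
  shows measurable_Xo: "(\<lambda>\<omega>. Xo \<omega> i) \<in> Hist k \<rightarrow>\<^sub>M Xi"
    and measurable_Ao: "(\<lambda>\<omega>. Ao \<omega> i) \<in> Hist k \<rightarrow>\<^sub>M MA"
    and measurable_Yo: "(\<lambda>\<omega>. Yo \<omega> i) \<in> borel_measurable (Hist k)"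
  using measurable_obs_component[OF assms]
  unfolding Xo_def Ao_def Yo_def obsM_def by measurable

lemma measurable_fun_upd_comp:
  "F \<in> borel_measurable (Hist (Suc i)) \<Longrightarrow> h \<in> space (Hist i)
    \<Longrightarrow> (\<lambda>ob. F (h(i := ob))) \<in> borel_measurable Obs"
  using measurable_comp[OF measurable_fun_upd_Hist] by (auto simp: comp_def)

lemma integral_Gam_measurable:
  fixes F :: "('x, 'a) obs \<Rightarrow> real"
  assumes F[measurable]: "F \<in> borel_measurable Obs"
  shows "(\<lambda>(x, a). \<integral>y. F (x, a, y) \<partial>Gam x a) \<in> borel_measurable (Xi \<Otimes>\<^sub>M MA)"
proof -
  have "(\<lambda>w. integral\<^sup>L (response_kernel (fst w) (snd w)) F) \<in> borel_measurable (Xi \<Otimes>\<^sub>M MA)"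
    using measurable_compose[OF measurable_prob_algebraD[OF response_kernel_measurable]
        integral_measurable_subprob_algebra[OF F]]
    by (simp add: split_beta')
  then show ?thesis
    by (rule measurable_cong[THEN iffD1, rotated])
      (auto simp: space_pair_measure integral_response_kernel[OF _ _ F])
qed

lemma mu_star_measurable[measurable]: "(\<lambda>(x, a). mu_star Gam x a) \<in> borel_measurable (Xi \<Otimes>\<^sub>M MA)"
proof -
  have "(\<lambda>ob::('x, 'a) obs. snd (snd ob)) \<in> borel_measurable Obs" unfolding obsM_def by measurable
  from integral_Gam_measurable[OF this] show ?thesis by (simp add: mu_star_def)
qed

lemma sigma_fn_measurable[measurable]: "(\<lambda>(x, a). sigma_fn Gam x a) \<in> borel_measurable (Xi \<Otimes>\<^sub>M MA)"
proof -
  have "(\<lambda>ob::('x, 'a) obs. (snd (snd ob) - mu_star Gam (fst ob) (fst (snd ob)))\<^sup>2) \<in> borel_measurable Obs"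
    unfolding obsM_def by measurable
  from integral_Gam_measurable[OF this] show ?thesis
    unfolding sigma_fn_def by (simp add: split_beta')
qed

lemma
  assumes i: "i < n" and h: "h \<in> space (Hist i)" and x: "x \<in> space Xi"
  shows measurable_pol_action: "(\<lambda>a. pol i x h a) \<in> borel_measurable MA"
    and prob_space_policy_density: "prob_space (density MA (\<lambda>a. ennreal (pol i x h a)))"
    and integrable_pol: "integrable MA (\<lambda>a. pol i x h a)"
    and integral_pol: "(\<integral>a. pol i x h a \<partial>MA) = 1"
proof -
  note [measurable (raw)] = pol_measurable[OF i]
  show m: "(\<lambda>a. pol i x h a) \<in> borel_measurable MA" using h x by measurable
  show "prob_space (density MA (\<lambda>a. ennreal (pol i x h a)))"
    using measurable_space[OF policy_density_prob_kernel[OF i], of "(h, x)"] h x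
    by (simp add: space_prob_algebra space_pair_measure)
  have nn: "AE a in MA. 0 \<le> pol i x h a" using pi_nonneg[OF i x h] by auto
  show "integrable MA (\<lambda>a. pol i x h a)"
    by (rule integrableI_nonneg[OF m nn]) (simp add: pi_dens[OF i x h])
  show "(\<integral>a. pol i x h a \<partial>MA) = 1"
    by (simp add: integral_eq_nn_integral[OF m nn] pi_dens[OF i x h])
qed

text \<open>Where \<open>pol\<close> vanishes, overlap forces \<open>g = 0\<close>, so the junk value \<open>g / 0 = 0\<close> is harmless.\<close>
lemma pol_mult_weight:
  "i < n \<Longrightarrow> h \<in> space (Hist i) \<Longrightarrow> x \<in> space Xi \<Longrightarrow> a \<in> space MA
    \<Longrightarrow> pol i x h a * (g x a / pol i x h a) = g x a"
  using overlap[of i x h a] by (cases "g x a = 0") auto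

lemma integral_action_kernel:
  fixes F :: "('x, 'a) obs \<Rightarrow> real"
  assumes i: "i < n" and h: "h \<in> space (Hist i)" and x: "x \<in> space Xi"
    and F[measurable]: "F \<in> borel_measurable Obs" and int: "integrable (action_kernel i h x) F"
  shows "integrable MA (\<lambda>a. pol i x h a * (\<integral>y. F (x, a, y) \<partial>Gam x a))"
    and "integral\<^sup>L (action_kernel i h x) F = (\<integral>a. pol i x h a * (\<integral>y. F (x, a, y) \<partial>Gam x a) \<partial>MA)"
proof -
  let ?d = "density MA (\<lambda>a. ennreal (pol i x h a))"
  have [measurable]: "x \<in> space Xi" by (rule x)
  note [measurable] = integral_Gam_measurable[OF F]
  have kernel: "response_kernel x \<in> ?d \<rightarrow>\<^sub>M prob_algebra Obs"
    using measurable_Pair2[OF response_kernel_measurable x] by simp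
  note bind = integral_bind_prob_kernel[OF kernel prob_space_policy_density[OF i h x] F]
  have resp: "integral\<^sup>L (response_kernel x a) F = (\<integral>y. F (x, a, y) \<partial>Gam x a)" if "a \<in> space ?d" for a
    using that integral_response_kernel[OF x _ F] by simp
  have Gam_int_meas: "(\<lambda>a. \<integral>y. F (x, a, y) \<partial>Gam x a) \<in> borel_measurable MA" by measurable
  have nn: "AE a in MA. 0 \<le> pol i x h a" using pi_nonneg[OF i x h] by auto
  have "integrable ?d (\<lambda>a. integral\<^sup>L (response_kernel x a) F)"
    using bind(2) int by (simp add: action_kernel_def)
  then have "integrable ?d (\<lambda>a. \<integral>y. F (x, a, y) \<partial>Gam x a)"
    by (rule Bochner_Integration.integrable_cong[THEN iffD1, OF refl, rotated]) (simp add: resp)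
  then show "integrable MA (\<lambda>a. pol i x h a * (\<integral>y. F (x, a, y) \<partial>Gam x a))"
    using integrable_density[OF Gam_int_meas measurable_pol_action[OF i h x] nn] by simp
  have "integral\<^sup>L (action_kernel i h x) F = (\<integral>a. integral\<^sup>L (response_kernel x a) F \<partial>?d)"
    using bind(3) int by (simp add: action_kernel_def)
  also have "\<dots> = (\<integral>a. (\<integral>y. F (x, a, y) \<partial>Gam x a) \<partial>?d)"
    by (rule Bochner_Integration.integral_cong) (simp_all add: resp)
  also have "\<dots> = (\<integral>a. pol i x h a * (\<integral>y. F (x, a, y) \<partial>Gam x a) \<partial>MA)"
    using integral_density[OF Gam_int_meas measurable_pol_action[OF i h x] nn] by simp
  finally show "integral\<^sup>L (action_kernel i h x) F = (\<integral>a. pol i x h a * (\<integral>y. F (x, a, y) \<partial>Gam x a) \<partial>MA)" .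
qed

lemma integral_Step:
  fixes F :: "('x, 'a) obs \<Rightarrow> real"
  assumes i: "i < n" and h: "h \<in> space (Hist i)" and F[measurable]: "F \<in> borel_measurable Obs"
    and int: "integrable (Step i h) F"
  shows "AE x in Xi. integrable MA (\<lambda>a. pol i x h a * (\<integral>y. F (x, a, y) \<partial>Gam x a))"
    and "integrable Xi (\<lambda>x. \<integral>a. pol i x h a * (\<integral>y. F (x, a, y) \<partial>Gam x a) \<partial>MA)"
    and "integral\<^sup>L (Step i h) F = (\<integral>x. (\<integral>a. pol i x h a * (\<integral>y. F (x, a, y) \<partial>Gam x a) \<partial>MA) \<partial>Xi)"
proof -
  note [measurable (raw)] = pol_measurable[OF i]
  have [measurable]: "h \<in> space (Hist i)" by (rule h)
  note [measurable] = integral_Gam_measurable[OF F]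
  have kernel: "action_kernel i h \<in> Xi \<rightarrow>\<^sub>M prob_algebra Obs"
    using measurable_Pair2[OF action_kernel_measurable[OF i] h] by simp
  note bind = integral_bind_prob_kernel[OF kernel Xi_prob F int[unfolded step_law_eq_bind]]
  note inner = integral_action_kernel[OF i h _ F]
  show "AE x in Xi. integrable MA (\<lambda>a. pol i x h a * (\<integral>y. F (x, a, y) \<partial>Gam x a))"
    using bind(1) by (elim AE_mp) (auto intro!: AE_I2 inner(1))
  have AE_eq: "AE x in Xi. integral\<^sup>L (action_kernel i h x) F
      = (\<integral>a. pol i x h a * (\<integral>y. F (x, a, y) \<partial>Gam x a) \<partial>MA)"
    using bind(1) by (elim AE_mp) (auto intro!: AE_I2 inner(2))
  have meas: "(\<lambda>x. \<integral>a. pol i x h a * (\<integral>y. F (x, a, y) \<partial>Gam x a) \<partial>MA) \<in> borel_measurable Xi"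
    by (rule sigma_finite_measure.borel_measurable_lebesgue_integral[OF MA_sf]) measurable
  show "integrable Xi (\<lambda>x. \<integral>a. pol i x h a * (\<integral>y. F (x, a, y) \<partial>Gam x a) \<partial>MA)"
    by (rule integrable_cong_AE_imp[OF bind(2) meas AE_eq])
  show "integral\<^sup>L (Step i h) F = (\<integral>x. (\<integral>a. pol i x h a * (\<integral>y. F (x, a, y) \<partial>Gam x a) \<partial>MA) \<partial>Xi)"
    unfolding step_law_eq_bind bind(3)
    using bind(2) by (intro integral_cong_AE[OF _ meas AE_eq]) (rule borel_measurable_integrable)
qed

lemma
  assumes x: "x \<in> space Xi" and a: "a \<in> space MA"
  shows integrable_Gam_id: "integrable (Gam x a) (\<lambda>y. y)"
    and integral_Gam_affine: "(\<integral>y. c * (y - d) + e \<partial>Gam x a) = c * (mu_star Gam x a - d) + e"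
    and integrable_Gam_sq_dev: "integrable (Gam x a) (\<lambda>y. (y - d)\<^sup>2)"
    and integral_Gam_sq_dev: "(\<integral>y. (y - d)\<^sup>2 \<partial>Gam x a) = (sigma_fn Gam x a)\<^sup>2 + (mu_star Gam x a - d)\<^sup>2"
proof -
  interpret prob_space "Gam x a" by (rule prob_space_Gam[OF x a])
  have "(\<lambda>y::real. y) \<in> borel_measurable (Gam x a)"
    unfolding measurable_cong_sets[OF sets_Gam[OF x a] refl] by simp
  then show int_id: "integrable (Gam x a) (\<lambda>y. y)"
    by (rule square_integrable_imp_integrable[OF _ Gam_var[OF x a]])
  have mean: "(\<integral>y. y \<partial>Gam x a) = mu_star Gam x a" by (simp add: mu_star_def)
  have affine: "c * (y - d) + e = c * y + (e - c * d)" for y :: real by (simp add: algebra_simps)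
  show "(\<integral>y. c * (y - d) + e \<partial>Gam x a) = c * (mu_star Gam x a - d) + e"
    unfolding affine using int_id mean by (simp add: prob_space algebra_simps)
  have sq: "(y - d)\<^sup>2 = y\<^sup>2 - 2 * d * y + d\<^sup>2" for y d :: real by (simp add: power2_eq_square algebra_simps)
  show "integrable (Gam x a) (\<lambda>y. (y - d)\<^sup>2)" for d
    unfolding sq using Gam_var[OF x a] int_id by auto
  have sq_int: "(\<integral>y. (y - d)\<^sup>2 \<partial>Gam x a) = (\<integral>y. y\<^sup>2 \<partial>Gam x a) - 2 * d * mu_star Gam x a + d\<^sup>2" for d
    unfolding sq using Gam_var[OF x a] int_id mean by (simp add: prob_space)
  have "0 \<le> (\<integral>y. (y - mu_star Gam x a)\<^sup>2 \<partial>Gam x a)" by (intro integral_nonneg_AE) auto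
  then have "(sigma_fn Gam x a)\<^sup>2 = (\<integral>y. (y - mu_star Gam x a)\<^sup>2 \<partial>Gam x a)"
    unfolding sigma_fn_def by simp
  then show "(\<integral>y. (y - d)\<^sup>2 \<partial>Gam x a) = (sigma_fn Gam x a)\<^sup>2 + (mu_star Gam x a - d)\<^sup>2"
    using sq_int[of d] sq_int[of "mu_star Gam x a"] by (simp add: power2_eq_square algebra_simps)
qed

subsection \<open>The expected loss\<close>

definition weighted_sq :: "nat \<Rightarrow> ('x \<Rightarrow> 'a \<Rightarrow> real) \<Rightarrow> ('x, 'a) hist \<Rightarrow> real" where
  "weighted_sq i \<phi> \<omega> = (g (Xo \<omega> i) (Ao \<omega> i))\<^sup>2 * (\<phi> (Xo \<omega> i) (Ao \<omega> i))\<^sup>2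
     / (pol i (Xo \<omega> i) (past \<omega> i) (Ao \<omega> i))\<^sup>2"

lemma wnorm2_eq: "wnorm2 Xi MA Gam pol g k \<phi> = (\<Sum>i<k. integral\<^sup>L (Data k) (weighted_sq i \<phi>)) / real k"
  by (simp add: wnorm2_def weighted_sq_def[abs_def])

lemma weighted_sq_past: "i < k \<Longrightarrow> weighted_sq i \<phi> (past \<omega> k) = weighted_sq i \<phi> \<omega>"
  by (simp add: weighted_sq_def Xo_def Ao_def past_past past_apply)

lemma loss_past: "i < k \<Longrightarrow> loss pol g i \<mu> (past \<omega> k) = loss pol g i \<mu> \<omega>"
  by (simp add: loss_def Xo_def Ao_def Yo_def past_past past_apply)

lemma
  assumes i: "i < n" and ik: "i < k" and \<phi>: "(\<lambda>(x, a). \<phi> x a) \<in> borel_measurable (Xi \<Otimes>\<^sub>M MA)"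
  shows measurable_weighted_sq: "weighted_sq i \<phi> \<in> borel_measurable (Hist k)"
    and measurable_loss: "loss pol g i \<phi> \<in> borel_measurable (Hist k)"
proof -
  note [measurable] = measurable_Xo[OF ik] measurable_Ao[OF ik] measurable_Yo[OF ik]
    measurable_past[OF less_imp_le[OF ik]]
  note [measurable (raw)] = pol_measurable[OF i] measurable_uncurry_compose[OF \<phi>]
  show "weighted_sq i \<phi> \<in> borel_measurable (Hist k)"
    unfolding weighted_sq_def[abs_def] by measurable
  show "loss pol g i \<phi> \<in> borel_measurable (Hist k)"
    unfolding loss_def[abs_def] by measurable
qed

lemma integral_Step_loss_bias_variance:
  assumes i: "i < n" and h: "h \<in> space (Hist i)"
    and \<mu>: "(\<lambda>(x, a). \<mu> x a) \<in> borel_measurable (Xi \<Otimes>\<^sub>M MA)"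
    and int_loss: "integrable (Step i h) (\<lambda>ob. loss pol g i \<mu> (h(i := ob)))"
    and int_split: "integrable (Step i h) (\<lambda>ob. weighted_sq i (sigma_fn Gam) (h(i := ob))
        + weighted_sq i (\<lambda>x a. \<mu> x a - mu_star Gam x a) (h(i := ob)))"
  shows "(\<integral>ob. loss pol g i \<mu> (h(i := ob)) \<partial>Step i h)
    = (\<integral>ob. weighted_sq i (sigma_fn Gam) (h(i := ob))
        + weighted_sq i (\<lambda>x a. \<mu> x a - mu_star Gam x a) (h(i := ob)) \<partial>Step i h)"
proof -
  let ?S = "\<lambda>\<omega>. weighted_sq i (sigma_fn Gam) \<omega> + weighted_sq i (\<lambda>x a. \<mu> x a - mu_star Gam x a) \<omega>"
  have [measurable (raw)]: "f \<in> M \<rightarrow>\<^sub>M Xi \<Longrightarrow> k \<in> M \<rightarrow>\<^sub>M MA \<Longrightarrow> (\<lambda>w. \<mu> (f w) (k w)) \<in> borel_measurable M"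
    for f k and M :: "'z measure"
    by (rule measurable_uncurry_compose[OF \<mu>])
  have \<mu>_diff: "(\<lambda>(x, a). \<mu> x a - mu_star Gam x a) \<in> borel_measurable (Xi \<Otimes>\<^sub>M MA)"
    by measurable
  have meas_loss: "(\<lambda>ob. loss pol g i \<mu> (h(i := ob))) \<in> borel_measurable Obs"
    by (intro measurable_fun_upd_comp measurable_loss[OF i _ \<mu>] h) simp
  have meas_split: "(\<lambda>ob. ?S (h(i := ob))) \<in> borel_measurable Obs"
    using measurable_weighted_sq[OF i _ sigma_fn_measurable] measurable_weighted_sq[OF i _ \<mu>_diff]
    by (intro measurable_fun_upd_comp h) auto
  have "(\<integral>y. loss pol g i \<mu> (h(i := (x, a, y))) \<partial>Gam x a) = (\<integral>y. ?S (h(i := (x, a, y))) \<partial>Gam x a)"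
    if x: "x \<in> space Xi" and a: "a \<in> space MA" for x a
  proof -
    interpret prob_space "Gam x a" by (rule prob_space_Gam[OF x a])
    have "(\<integral>y. loss pol g i \<mu> (h(i := (x, a, y))) \<partial>Gam x a)
        = (g x a)\<^sup>2 / (pol i x h a)\<^sup>2 * (\<integral>y. (y - \<mu> x a)\<^sup>2 \<partial>Gam x a)"
      by (simp add: loss_def Xo_def Ao_def Yo_def past_fun_upd_self[OF h])
    also have "\<dots> = (g x a)\<^sup>2 / (pol i x h a)\<^sup>2 * ((sigma_fn Gam x a)\<^sup>2 + (mu_star Gam x a - \<mu> x a)\<^sup>2)"
      by (simp add: integral_Gam_sq_dev[OF x a])
    also have "\<dots> = (\<integral>y. ?S (h(i := (x, a, y))) \<partial>Gam x a)"
      by (simp add: weighted_sq_def Xo_def Ao_def past_fun_upd_self[OF h] prob_space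
          power2_commute[of "mu_star Gam x a"] add_divide_distrib algebra_simps)
    finally show ?thesis .
  qed
  then show ?thesis
    unfolding integral_Step(3)[OF i h meas_loss int_loss] integral_Step(3)[OF i h meas_split int_split]
    by (intro Bochner_Integration.integral_cong refl) simp
qed

lemma integral_loss_bias_variance:
  assumes i: "i < n" and \<mu>: "(\<lambda>(x, a). \<mu> x a) \<in> borel_measurable (Xi \<Otimes>\<^sub>M MA)"
    and int_loss: "integrable (Data n) (loss pol g i \<mu>)"
    and int_noise: "integrable (Data n) (weighted_sq i (sigma_fn Gam))"
    and int_bias: "integrable (Data n) (weighted_sq i (\<lambda>x a. \<mu> x a - mu_star Gam x a))"
  shows "integral\<^sup>L (Data n) (loss pol g i \<mu>) = integral\<^sup>L (Data n) (weighted_sq i (sigma_fn Gam))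
    + integral\<^sup>L (Data n) (weighted_sq i (\<lambda>x a. \<mu> x a - mu_star Gam x a))"
proof -
  let ?S = "\<lambda>\<omega>. weighted_sq i (sigma_fn Gam) \<omega> + weighted_sq i (\<lambda>x a. \<mu> x a - mu_star Gam x a) \<omega>"
  have \<mu>_diff: "(\<lambda>(x, a). \<mu> x a - mu_star Gam x a) \<in> borel_measurable (Xi \<Otimes>\<^sub>M MA)"
    using \<mu> by (simp add: split_beta') measurable
  have loss: "loss pol g i \<mu> \<in> borel_measurable (Hist (Suc i))"
    "\<And>\<omega>. loss pol g i \<mu> (past \<omega> (Suc i)) = loss pol g i \<mu> \<omega>"
    using measurable_loss[OF i _ \<mu>] loss_past by auto
  have split: "?S \<in> borel_measurable (Hist (Suc i))" "\<And>\<omega>. ?S (past \<omega> (Suc i)) = ?S \<omega>"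
    "integrable (Data n) ?S"
    using measurable_weighted_sq[OF i _ sigma_fn_measurable] measurable_weighted_sq[OF i _ \<mu>_diff]
      int_noise int_bias by (auto simp: weighted_sq_past)
  have "integral\<^sup>L (Data n) (loss pol g i \<mu>) \<le> integral\<^sup>L (Data n) ?S + 0"
    by (rule integral_data_law_le_step[OF i loss int_loss split])
      (simp add: integral_Step_loss_bias_variance[OF i _ \<mu>])
  moreover have "integral\<^sup>L (Data n) ?S \<le> integral\<^sup>L (Data n) (loss pol g i \<mu>) + 0"
    by (rule integral_data_law_le_step[OF i split loss int_loss])
      (simp add: integral_Step_loss_bias_variance[OF i _ \<mu>])
  ultimately show ?thesis using int_noise int_bias by simp
qed

end

locale aipw_design = adaptive_design Xi MA Gam pol g n
  for Xi :: "'x measure" and MA :: "'a measure" and Gam pol g n +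
  fixes muhat :: "nat \<Rightarrow> ('x, 'a) hist \<Rightarrow> 'x \<Rightarrow> 'a \<Rightarrow> real"
  assumes muhat_meas: "\<And>i. i < n \<Longrightarrow>
       (\<lambda>(h, x, a). muhat i h x a) \<in> borel_measurable (histM Xi MA i \<Otimes>\<^sub>M (Xi \<Otimes>\<^sub>M MA))"
    and int_gmu: "\<And>x. x \<in> space Xi \<Longrightarrow> integrable MA (\<lambda>a. g x a * mu_star Gam x a)"
    and int_gmuhat: "\<And>i h x. i < n \<Longrightarrow> h \<in> space (histM Xi MA i) \<Longrightarrow> x \<in> space Xi
       \<Longrightarrow> integrable MA (\<lambda>a. g x a * muhat i h x a)"
    and int_target: "integrable Xi (\<lambda>x. (innerA MA (g x) (mu_star Gam x))\<^sup>2)"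
begin

abbreviation "\<tau> \<equiv> tau Xi MA Gam g"

definition target_fn :: "'x \<Rightarrow> real" where
  "target_fn x = innerA MA (g x) (mu_star Gam x)"

definition dm_value :: "nat \<Rightarrow> ('x, 'a) hist \<Rightarrow> 'x \<Rightarrow> real" where
  "dm_value i h x = innerA MA (g x) (muhat i h x)"

definition ipw_term :: "nat \<Rightarrow> ('x, 'a) hist \<Rightarrow> real" where
  "ipw_term i \<omega> = g (Xo \<omega> i) (Ao \<omega> i) / pol i (Xo \<omega> i) (past \<omega> i) (Ao \<omega> i)
     * (Yo \<omega> i - muhat i (past \<omega> i) (Xo \<omega> i) (Ao \<omega> i))"

definition score :: "nat \<Rightarrow> ('x, 'a) hist \<Rightarrow> real" where
  "score i \<omega> = ipw_term i \<omega> + dm_value i (past \<omega> i) (Xo \<omega> i) - \<tau>"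

lemma aipw_minus_tau: "n * (aipw MA pol g n muhat \<omega> - \<tau>) = (\<Sum>i<n. score i \<omega>)"
  using n_pos by (simp add: aipw_def score_def ipw_term_def dm_value_def sum.distrib sum_subtractf
      right_diff_distrib)

lemma loss_muhat: "loss pol g i (muhat i (past \<omega> i)) \<omega> = (ipw_term i \<omega>)\<^sup>2"
  by (simp add: loss_def ipw_term_def power_mult_distrib power_divide)

lemma
  assumes "i < k"
  shows score_past: "score i (past \<omega> k) = score i \<omega>"
    and ipw_term_past: "ipw_term i (past \<omega> k) = ipw_term i \<omega>"
  using assms by (simp_all add: score_def ipw_term_def Xo_def Ao_def Yo_def past_past past_apply)

lemma score_fun_upd_less: "i < j \<Longrightarrow> score i (h(j := ob)) = score i h"
  by (simp add: score_def ipw_term_def Xo_def Ao_def Yo_def past_fun_upd_less)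

lemma
  assumes "h \<in> space (Hist i)"
  shows ipw_term_fun_upd_self: "ipw_term i (h(i := (x, a, y))) = g x a / pol i x h a * (y - muhat i h x a)"
    and score_fun_upd_self: "score i (h(i := (x, a, y)))
      = g x a / pol i x h a * (y - muhat i h x a) + (dm_value i h x - \<tau>)"
  by (simp_all add: score_def ipw_term_def Xo_def Ao_def Yo_def past_fun_upd_self[OF assms])

lemma
  shows integrable_target_fn: "integrable Xi target_fn"
    and tau_eq_integral: "\<tau> = integral\<^sup>L Xi target_fn"
    and integrable_target_var: "integrable Xi (\<lambda>x. (target_fn x - \<tau>)\<^sup>2)"
proof -
  interpret prob_space Xi by (rule Xi_prob)
  have meas: "target_fn \<in> borel_measurable Xi"
    unfolding target_fn_def innerA_def
    by (rule sigma_finite_measure.borel_measurable_lebesgue_integral[OF MA_sf]) measurable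
  show int: "integrable Xi target_fn"
    using square_integrable_imp_integrable[OF meas] int_target by (simp add: target_fn_def)
  show "\<tau> = integral\<^sup>L Xi target_fn" unfolding tau_def target_fn_def[abs_def] ..
  have "(target_fn x - \<tau>)\<^sup>2 = (target_fn x)\<^sup>2 - 2 * \<tau> * target_fn x + \<tau>\<^sup>2" for x
    by (simp add: power2_eq_square algebra_simps)
  then show "integrable Xi (\<lambda>x. (target_fn x - \<tau>)\<^sup>2)"
    using int_target int unfolding target_fn_def by simp
qed

lemma muhat_measurable:
  assumes "i < n" "h \<in> M \<rightarrow>\<^sub>M Hist i" "f \<in> M \<rightarrow>\<^sub>M Xi" "k \<in> M \<rightarrow>\<^sub>M MA"
  shows "(\<lambda>w. muhat i (h w) (f w) (k w)) \<in> borel_measurable M"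
  using measurable_uncurry_compose[OF muhat_meas[OF assms(1)] assms(2) measurable_Pair[OF assms(3,4)]]
  by simp

lemma dm_value_measurable:
  assumes i: "i < n" and "h \<in> M \<rightarrow>\<^sub>M Hist i" "f \<in> M \<rightarrow>\<^sub>M Xi"
  shows "(\<lambda>w. dm_value i (h w) (f w)) \<in> borel_measurable M"
proof -
  note [measurable (raw)] = muhat_measurable[OF i]
  have "(\<lambda>w. \<integral>a. g (snd w) a * muhat i (fst w) (snd w) a \<partial>MA) \<in> borel_measurable (Hist i \<Otimes>\<^sub>M Xi)"
    by (rule sigma_finite_measure.borel_measurable_lebesgue_integral[OF MA_sf]) measurable
  from measurable_compose[OF measurable_Pair[OF assms(2,3)] this]
  show ?thesis by (simp add: dm_value_def innerA_def)
qed

lemma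
  assumes i: "i < n" and ik: "i < k"
  shows measurable_ipw_term: "ipw_term i \<in> borel_measurable (Hist k)"
    and measurable_score: "score i \<in> borel_measurable (Hist k)"
proof -
  note [measurable] = measurable_Xo[OF ik] measurable_Ao[OF ik] measurable_Yo[OF ik]
    measurable_past[OF less_imp_le[OF ik]]
  note [measurable (raw)] = pol_measurable[OF i] muhat_measurable[OF i] dm_value_measurable[OF i]
  show "ipw_term i \<in> borel_measurable (Hist k)" unfolding ipw_term_def[abs_def] by measurable
  then show "score i \<in> borel_measurable (Hist k)" unfolding score_def[abs_def] by measurable
qed

lemma integral_MA_conditional_score:
  assumes i: "i < n" and h: "h \<in> space (Hist i)" and x: "x \<in> space Xi"
  shows "(\<integral>a. g x a * mu_star Gam x a - g x a * muhat i h x a + pol i x h a * e \<partial>MA)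
    = target_fn x - dm_value i h x + e"
  using int_gmu[OF x] int_gmuhat[OF i h x] integrable_pol[OF i h x] integral_pol[OF i h x]
  by (simp add: target_fn_def dm_value_def innerA_def)

lemma integral_Step_score:
  assumes i: "i < n" and h: "h \<in> space (Hist i)"
    and int: "integrable (Step i h) (\<lambda>ob. score i (h(i := ob)))"
  shows "(\<integral>ob. score i (h(i := ob)) \<partial>Step i h) = 0"
proof -
  have meas: "(\<lambda>ob. score i (h(i := ob))) \<in> borel_measurable Obs"
    by (intro measurable_fun_upd_comp measurable_score[OF i] h) simp
  have inner: "(\<integral>a. pol i x h a * (\<integral>y. score i (h(i := (x, a, y))) \<partial>Gam x a) \<partial>MA) = target_fn x - \<tau>"
    if x: "x \<in> space Xi" for x
  proof -
    have "pol i x h a * (\<integral>y. score i (h(i := (x, a, y))) \<partial>Gam x a)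
        = g x a * mu_star Gam x a - g x a * muhat i h x a + pol i x h a * (dm_value i h x - \<tau>)"
      if a: "a \<in> space MA" for a
    proof -
      have "pol i x h a * (\<integral>y. score i (h(i := (x, a, y))) \<partial>Gam x a)
          = pol i x h a * (g x a / pol i x h a * (mu_star Gam x a - muhat i h x a) + (dm_value i h x - \<tau>))"
        unfolding score_fun_upd_self[OF h] integral_Gam_affine[OF x a] ..
      also have "\<dots> = pol i x h a * (g x a / pol i x h a) * (mu_star Gam x a - muhat i h x a)
          + pol i x h a * (dm_value i h x - \<tau>)"
        by (simp add: algebra_simps)
      also have "\<dots> = g x a * (mu_star Gam x a - muhat i h x a) + pol i x h a * (dm_value i h x - \<tau>)"
        by (simp only: pol_mult_weight[OF i h x a])
      finally show ?thesis by (simp add: right_diff_distrib)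
    qed
    then have "(\<integral>a. pol i x h a * (\<integral>y. score i (h(i := (x, a, y))) \<partial>Gam x a) \<partial>MA)
        = (\<integral>a. g x a * mu_star Gam x a - g x a * muhat i h x a + pol i x h a * (dm_value i h x - \<tau>) \<partial>MA)"
      by (intro Bochner_Integration.integral_cong) auto
    then show ?thesis by (simp add: integral_MA_conditional_score[OF i h x])
  qed
  interpret prob_space Xi by (rule Xi_prob)
  have "(\<integral>ob. score i (h(i := ob)) \<partial>Step i h) = (\<integral>x. target_fn x - \<tau> \<partial>Xi)"
    unfolding integral_Step(3)[OF i h meas int] by (intro Bochner_Integration.integral_cong) (auto simp: inner)
  also have "\<dots> = 0"
    using integrable_target_fn by (simp add: prob_space tau_eq_integral[symmetric])
  finally show ?thesis .
qed

lemma pol_integral_Gam_score_sq: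
  assumes i: "i < n" and h: "h \<in> space (Hist i)" and x: "x \<in> space Xi" and a: "a \<in> space MA"
  shows "pol i x h a * (\<integral>y. (score i (h(i := (x, a, y))))\<^sup>2 \<partial>Gam x a)
    = pol i x h a * (\<integral>y. (ipw_term i (h(i := (x, a, y))))\<^sup>2 \<partial>Gam x a)
      + 2 * (dm_value i h x - \<tau>) * (g x a * mu_star Gam x a - g x a * muhat i h x a)
      + (dm_value i h x - \<tau>)\<^sup>2 * pol i x h a"
proof -
  interpret prob_space "Gam x a" by (rule prob_space_Gam[OF x a])
  define w where "w = g x a / pol i x h a"
  define e where "e = dm_value i h x - \<tau>"
  define d where "d = muhat i h x a"
  have "(score i (h(i := (x, a, y))))\<^sup>2 = w\<^sup>2 * (y - d)\<^sup>2 + ((2 * e * w) * (y - d) + e\<^sup>2)" for y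
    unfolding score_fun_upd_self[OF h] w_def[symmetric] e_def[symmetric] d_def[symmetric]
    by (simp add: power2_eq_square algebra_simps)
  then have score_sq: "(\<integral>y. (score i (h(i := (x, a, y))))\<^sup>2 \<partial>Gam x a)
      = w\<^sup>2 * (\<integral>y. (y - d)\<^sup>2 \<partial>Gam x a) + ((2 * e * w) * (mu_star Gam x a - d) + e\<^sup>2)"
    using integrable_Gam_sq_dev[OF x a] integrable_Gam_id[OF x a]
    by (simp add: integral_Gam_affine[OF x a, symmetric])
  have ipw_sq: "(\<integral>y. (ipw_term i (h(i := (x, a, y))))\<^sup>2 \<partial>Gam x a) = w\<^sup>2 * (\<integral>y. (y - d)\<^sup>2 \<partial>Gam x a)"
    unfolding ipw_term_fun_upd_self[OF h] w_def[symmetric] d_def[symmetric] by (simp add: power_mult_distrib)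
  have "pol i x h a * (\<integral>y. (score i (h(i := (x, a, y))))\<^sup>2 \<partial>Gam x a)
      = pol i x h a * (w\<^sup>2 * (\<integral>y. (y - d)\<^sup>2 \<partial>Gam x a))
        + 2 * e * (pol i x h a * w) * (mu_star Gam x a - d) + e\<^sup>2 * pol i x h a"
    unfolding score_sq by (simp add: algebra_simps)
  also have "\<dots> = pol i x h a * (\<integral>y. (ipw_term i (h(i := (x, a, y))))\<^sup>2 \<partial>Gam x a)
        + 2 * e * g x a * (mu_star Gam x a - d) + e\<^sup>2 * pol i x h a"
    unfolding ipw_sq w_def pol_mult_weight[OF i h x a] ..
  finally show ?thesis unfolding e_def d_def by (simp add: algebra_simps)
qed

lemma integral_Step_score_sq_le:
  assumes i: "i < n" and h: "h \<in> space (Hist i)"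
    and int_score: "integrable (Step i h) (\<lambda>ob. (score i (h(i := ob)))\<^sup>2)"
    and int_ipw: "integrable (Step i h) (\<lambda>ob. (ipw_term i (h(i := ob)))\<^sup>2)"
  shows "(\<integral>ob. (score i (h(i := ob)))\<^sup>2 \<partial>Step i h)
    \<le> (\<integral>ob. (ipw_term i (h(i := ob)))\<^sup>2 \<partial>Step i h) + (\<integral>x. (target_fn x - \<tau>)\<^sup>2 \<partial>Xi)"
proof -
  have "(\<lambda>ob. (score i (h(i := ob)))\<^sup>2) \<in> borel_measurable Obs"
    "(\<lambda>ob. (ipw_term i (h(i := ob)))\<^sup>2) \<in> borel_measurable Obs"
    using measurable_score[OF i] measurable_ipw_term[OF i] h
    by (auto intro!: measurable_fun_upd_comp borel_measurable_power)
  note S = integral_Step[OF i h this(1) int_score] and I = integral_Step[OF i h this(2) int_ipw]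
  define A where "A x = (\<lambda>a. pol i x h a * (\<integral>y. (ipw_term i (h(i := (x, a, y))))\<^sup>2 \<partial>Gam x a))" for x
  have inner: "(\<integral>a. pol i x h a * (\<integral>y. (score i (h(i := (x, a, y))))\<^sup>2 \<partial>Gam x a) \<partial>MA)
      \<le> integral\<^sup>L MA (A x) + (target_fn x - \<tau>)\<^sup>2"
    if x: "x \<in> space Xi" and int_A: "integrable MA (A x)" for x
  proof -
    let ?e = "dm_value i h x - \<tau>"
    have "(\<integral>a. pol i x h a * (\<integral>y. (score i (h(i := (x, a, y))))\<^sup>2 \<partial>Gam x a) \<partial>MA)
        = (\<integral>a. A x a + (2 * ?e * (g x a * mu_star Gam x a - g x a * muhat i h x a)
            + ?e\<^sup>2 * pol i x h a) \<partial>MA)"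
      using pol_integral_Gam_score_sq[OF i h x] by (intro Bochner_Integration.integral_cong) (auto simp: A_def)
    also have "\<dots> = integral\<^sup>L MA (A x) + (2 * ?e * (target_fn x - dm_value i h x) + ?e\<^sup>2)"
      using int_A int_gmu[OF x] int_gmuhat[OF i h x] integrable_pol[OF i h x] integral_pol[OF i h x]
      by (simp add: target_fn_def dm_value_def innerA_def)
    also have "\<dots> \<le> integral\<^sup>L MA (A x) + (target_fn x - \<tau>)\<^sup>2"
    proof -
      have "(target_fn x - \<tau>)\<^sup>2 = 2 * ?e * (target_fn x - dm_value i h x) + ?e\<^sup>2 + (target_fn x - dm_value i h x)\<^sup>2"
        by (simp add: power2_eq_square algebra_simps)
      then show ?thesis by simp
    qed
    finally show ?thesis .
  qed
  have "(\<integral>ob. (score i (h(i := ob)))\<^sup>2 \<partial>Step i h)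
      = (\<integral>x. (\<integral>a. pol i x h a * (\<integral>y. (score i (h(i := (x, a, y))))\<^sup>2 \<partial>Gam x a) \<partial>MA) \<partial>Xi)"
    by (rule S(3))
  also have "\<dots> \<le> (\<integral>x. integral\<^sup>L MA (A x) + (target_fn x - \<tau>)\<^sup>2 \<partial>Xi)"
  proof (rule integral_mono_AE)
    show "AE x in Xi. (\<integral>a. pol i x h a * (\<integral>y. (score i (h(i := (x, a, y))))\<^sup>2 \<partial>Gam x a) \<partial>MA)
        \<le> integral\<^sup>L MA (A x) + (target_fn x - \<tau>)\<^sup>2"
      using I(1) unfolding A_def[symmetric] by (elim AE_mp) (auto intro!: AE_I2 inner)
  qed (use S(2) I(2) integrable_target_var in \<open>auto simp: A_def\<close>)
  also have "\<dots> = (\<integral>ob. (ipw_term i (h(i := ob)))\<^sup>2 \<partial>Step i h) + (\<integral>x. (target_fn x - \<tau>)\<^sup>2 \<partial>Xi)"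
    using I(2,3) integrable_target_var by (simp add: A_def)
  finally show ?thesis .
qed

lemma integral_Step_score_mult:
  assumes ij: "i < j" and j: "j < n" and h: "h \<in> space (Hist j)"
    and int: "integrable (Step j h) (\<lambda>ob. score i (h(j := ob)) * score j (h(j := ob)))"
  shows "(\<integral>ob. score i (h(j := ob)) * score j (h(j := ob)) \<partial>Step j h) = 0"
proof (cases "score i h = 0")
  case False
  then have "integrable (Step j h) (\<lambda>ob. score j (h(j := ob)))"
    using int by (simp add: score_fun_upd_less[OF ij])
  then show ?thesis by (simp add: score_fun_upd_less[OF ij] integral_Step_score[OF j h])
qed (simp add: score_fun_upd_less[OF ij])

lemma integral_score_sq_le:
  assumes i: "i < n"
    and int_score: "integrable (Data n) (\<lambda>\<omega>. (score i \<omega>)\<^sup>2)"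
    and int_ipw: "integrable (Data n) (\<lambda>\<omega>. (ipw_term i \<omega>)\<^sup>2)"
  shows "(\<integral>\<omega>. (score i \<omega>)\<^sup>2 \<partial>Data n) \<le> (\<integral>\<omega>. (ipw_term i \<omega>)\<^sup>2 \<partial>Data n) + (\<integral>x. (target_fn x - \<tau>)\<^sup>2 \<partial>Xi)"
proof (rule integral_data_law_le_step[OF i _ _ int_score _ _ int_ipw])
  fix h assume "h \<in> space (Hist i)" "integrable (Step i h) (\<lambda>ob. (score i (h(i := ob)))\<^sup>2)"
    "integrable (Step i h) (\<lambda>ob. (ipw_term i (h(i := ob)))\<^sup>2)"
  then show "(\<integral>ob. (score i (h(i := ob)))\<^sup>2 \<partial>Step i h)
      \<le> (\<integral>ob. (ipw_term i (h(i := ob)))\<^sup>2 \<partial>Step i h) + (\<integral>x. (target_fn x - \<tau>)\<^sup>2 \<partial>Xi)"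
    by (rule integral_Step_score_sq_le[OF i])
qed (use measurable_score[OF i] measurable_ipw_term[OF i] in \<open>auto simp: score_past ipw_term_past\<close>)

lemma
  assumes ij: "i < j" and j: "j < n"
    and int_i: "integrable (Data n) (\<lambda>\<omega>. (score i \<omega>)\<^sup>2)"
    and int_j: "integrable (Data n) (\<lambda>\<omega>. (score j \<omega>)\<^sup>2)"
  shows integrable_score_mult: "integrable (Data n) (\<lambda>\<omega>. score i \<omega> * score j \<omega>)"
    and integral_score_mult: "(\<integral>\<omega>. score i \<omega> * score j \<omega> \<partial>Data n) = 0"
proof -
  have meas: "(\<lambda>\<omega>. score i \<omega> * score j \<omega>) \<in> borel_measurable (Hist (Suc j))"
    using measurable_score[of i "Suc j"] measurable_score[of j "Suc j"] ij j by simp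
  show int: "integrable (Data n) (\<lambda>\<omega>. score i \<omega> * score j \<omega>)"
    using measurable_score[of i n] measurable_score[of j n] ij j int_i int_j
    by (intro integrable_mult_of_square_integrable) (auto simp: measurable_Data_iff)
  have past: "score i (past \<omega> (Suc j)) * score j (past \<omega> (Suc j)) = score i \<omega> * score j \<omega>" for \<omega>
    using ij by (simp add: score_past)
  have zero: "(\<lambda>\<omega>. 0::real) \<in> borel_measurable (Hist (Suc j))"
    "\<And>\<omega>. (\<lambda>\<omega>. 0::real) (past \<omega> (Suc j)) = (\<lambda>\<omega>. 0) \<omega>" "integrable (Data n) (\<lambda>\<omega>. 0::real)"
    by simp_all
  have "(\<integral>\<omega>. score i \<omega> * score j \<omega> \<partial>Data n) \<le> (\<integral>\<omega>. 0 \<partial>Data n) + 0"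
    by (rule integral_data_law_le_step[OF j meas past int zero]) (simp add: integral_Step_score_mult[OF ij j])
  moreover have "(\<integral>\<omega>. 0 \<partial>Data n) \<le> (\<integral>\<omega>. score i \<omega> * score j \<omega> \<partial>Data n) + 0"
    by (rule integral_data_law_le_step[OF j zero meas past int]) (simp add: integral_Step_score_mult[OF ij j])
  ultimately show "(\<integral>\<omega>. score i \<omega> * score j \<omega> \<partial>Data n) = 0" by simp
qed

end

locale aipw_regret_design = aipw_design Xi MA Gam pol g n muhat
  for Xi :: "'x measure" and MA :: "'a measure" and Gam pol g n muhat +
  fixes F :: "('x \<Rightarrow> 'a \<Rightarrow> real) set"
  assumes F_meas: "\<And>\<mu>. \<mu> \<in> F \<Longrightarrow> (\<lambda>(x, a). \<mu> x a) \<in> borel_measurable (Xi \<Otimes>\<^sub>M MA)"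
    and F_ne: "F \<noteq> {}"
    and int_sigma: "\<And>i. i < n \<Longrightarrow> integrable (data_law Xi MA Gam pol n) (\<lambda>\<omega>. (g (Xo \<omega> i) (Ao \<omega> i))\<^sup>2
       * (sigma_fn Gam (Xo \<omega> i) (Ao \<omega> i))\<^sup>2 / (pol i (Xo \<omega> i) (past \<omega> i) (Ao \<omega> i))\<^sup>2)"
    and int_F_norm: "\<And>i \<mu>. i < n \<Longrightarrow> \<mu> \<in> F \<Longrightarrow> integrable (data_law Xi MA Gam pol n)
       (\<lambda>\<omega>. (g (Xo \<omega> i) (Ao \<omega> i))\<^sup>2 * (\<mu> (Xo \<omega> i) (Ao \<omega> i) - mu_star Gam (Xo \<omega> i) (Ao \<omega> i))\<^sup>2
         / (pol i (Xo \<omega> i) (past \<omega> i) (Ao \<omega> i))\<^sup>2)"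
    and int_loss_F: "\<And>i \<mu>. i < n \<Longrightarrow> \<mu> \<in> F \<Longrightarrow> integrable (data_law Xi MA Gam pol n) (loss pol g i \<mu>)"
    and int_term1: "\<And>i. i < n \<Longrightarrow> integrable (data_law Xi MA Gam pol n) (\<lambda>\<omega>.
       (g (Xo \<omega> i) (Ao \<omega> i) / pol i (Xo \<omega> i) (past \<omega> i) (Ao \<omega> i)
          * (Yo \<omega> i - muhat i (past \<omega> i) (Xo \<omega> i) (Ao \<omega> i)))\<^sup>2)"
    and int_term2: "\<And>i. i < n \<Longrightarrow> integrable (data_law Xi MA Gam pol n) (\<lambda>\<omega>.
       (innerA MA (g (Xo \<omega> i)) (muhat i (past \<omega> i) (Xo \<omega> i)))\<^sup>2)"
    and int_regret: "integrable (data_law Xi MA Gam pol n) (regret pol g n F muhat)"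
begin

definition best_loss :: "('x, 'a) hist \<Rightarrow> real" where
  "best_loss \<omega> = (INF \<mu>\<in>F. \<Sum>i<n. loss pol g i \<mu> \<omega>)"

lemma regret_eq: "regret pol g n F muhat \<omega> = (\<Sum>i<n. (ipw_term i \<omega>)\<^sup>2) - best_loss \<omega>"
  by (simp add: regret_def best_loss_def loss_muhat)

lemma integrable_ipw_term_sq: "i < n \<Longrightarrow> integrable (Data n) (\<lambda>\<omega>. (ipw_term i \<omega>)\<^sup>2)"
  unfolding ipw_term_def by (rule int_term1)

lemma integrable_score_sq:
  assumes i: "i < n"
  shows "integrable (Data n) (\<lambda>\<omega>. (score i \<omega>)\<^sup>2)"
proof (rule Bochner_Integration.integrable_bound)
  interpret prob_space "Data n" by (rule prob_space_Data) simp
  let ?dm = "\<lambda>\<omega>. dm_value i (past \<omega> i) (Xo \<omega> i)"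
  show "integrable (Data n) (\<lambda>\<omega>. 3 * ((ipw_term i \<omega>)\<^sup>2 + (?dm \<omega>)\<^sup>2 + \<tau>\<^sup>2))"
    using integrable_ipw_term_sq[OF i] int_term2[OF i] by (simp add: dm_value_def)
  show "(\<lambda>\<omega>. (score i \<omega>)\<^sup>2) \<in> borel_measurable (Data n)"
    using measurable_score[OF i i] by (simp add: measurable_Data_iff)
  have "(u + v - w)\<^sup>2 \<le> 3 * (u\<^sup>2 + v\<^sup>2 + w\<^sup>2)" for u v w :: real
  proof -
    have "3 * (u\<^sup>2 + v\<^sup>2 + w\<^sup>2) - (u + v - w)\<^sup>2 = (u - v)\<^sup>2 + (u + w)\<^sup>2 + (v + w)\<^sup>2"
      by (simp add: power2_eq_square algebra_simps)
    then show ?thesis by (smt (verit) zero_le_power2)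
  qed
  then show "AE \<omega> in Data n. norm ((score i \<omega>)\<^sup>2) \<le> norm (3 * ((ipw_term i \<omega>)\<^sup>2 + (?dm \<omega>)\<^sup>2 + \<tau>\<^sup>2))"
    by (simp add: score_def)
qed

text \<open>The scores form a martingale difference sequence, so the cross terms vanish.\<close>
lemma integral_aipw_sq_error:
  "(\<integral>\<omega>. (aipw MA pol g n muhat \<omega> - \<tau>)\<^sup>2 \<partial>Data n) = (\<Sum>i<n. \<integral>\<omega>. (score i \<omega>)\<^sup>2 \<partial>Data n) / (real n)\<^sup>2"
proof -
  have "(aipw MA pol g n muhat \<omega> - \<tau>)\<^sup>2 = (\<Sum>i<n. score i \<omega>)\<^sup>2 / (real n)\<^sup>2" for \<omega>
    using aipw_minus_tau[of \<omega>, symmetric] n_pos by (simp add: power_mult_distrib)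
  moreover have "(\<integral>\<omega>. (\<Sum>i<n. score i \<omega>)\<^sup>2 \<partial>Data n) = (\<Sum>i<n. \<integral>\<omega>. (score i \<omega>)\<^sup>2 \<partial>Data n)"
  proof (rule integral_square_sum_orthogonal)
    fix i j assume "i \<in> {..<n}" "j \<in> {..<n}"
    then have i: "i < n" and j: "j < n" by simp_all
    note mult = integrable_score_mult integral_score_mult
    show "integrable (Data n) (\<lambda>\<omega>. score i \<omega> * score j \<omega>)"
    proof (cases i j rule: linorder_cases)
      case less
      show ?thesis by (rule mult(1)[OF less j integrable_score_sq[OF i] integrable_score_sq[OF j]])
    next
      case equal
      then show ?thesis using integrable_score_sq[OF i] by (simp add: power2_eq_square)
    next
      case greater
      show ?thesis using mult(1)[OF greater i integrable_score_sq[OF j] integrable_score_sq[OF i]]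
        by (simp add: mult.commute)
    qed
    assume "i \<noteq> j"
    then show "(\<integral>\<omega>. score i \<omega> * score j \<omega> \<partial>Data n) = 0"
    proof (cases i j rule: linorder_cases)
      case less
      show ?thesis by (rule mult(2)[OF less j integrable_score_sq[OF i] integrable_score_sq[OF j]])
    next
      case greater
      show ?thesis using mult(2)[OF greater i integrable_score_sq[OF j] integrable_score_sq[OF i]]
        by (simp add: mult.commute)
    qed simp
  qed simp
  ultimately show ?thesis by simp
qed

lemma integrable_best_loss: "integrable (Data n) best_loss"
proof -
  have "integrable (Data n) (\<lambda>\<omega>. (\<Sum>i<n. (ipw_term i \<omega>)\<^sup>2) - regret pol g n F muhat \<omega>)"
    using integrable_ipw_term_sq int_regret
    by (intro Bochner_Integration.integrable_diff Bochner_Integration.integrable_sum) auto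
  then show ?thesis by (simp add: regret_eq)
qed

lemma sum_integral_ipw_term_sq:
  "(\<Sum>i<n. \<integral>\<omega>. (ipw_term i \<omega>)\<^sup>2 \<partial>Data n)
    = integral\<^sup>L (Data n) (regret pol g n F muhat) + integral\<^sup>L (Data n) best_loss"
proof -
  have "(\<Sum>i<n. \<integral>\<omega>. (ipw_term i \<omega>)\<^sup>2 \<partial>Data n) = (\<integral>\<omega>. (\<Sum>i<n. (ipw_term i \<omega>)\<^sup>2) \<partial>Data n)"
    using integrable_ipw_term_sq by (simp add: Bochner_Integration.integral_sum)
  also have "\<dots> = (\<integral>\<omega>. regret pol g n F muhat \<omega> + best_loss \<omega> \<partial>Data n)"
    by (simp add: regret_eq)
  finally show ?thesis using int_regret integrable_best_loss by simp
qed

lemma integral_best_loss_le: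
  assumes \<mu>: "\<mu> \<in> F"
  shows "integral\<^sup>L (Data n) best_loss \<le> real n * (wnorm2 Xi MA Gam pol g n (sigma_fn Gam)
    + wnorm2 Xi MA Gam pol g n (\<lambda>x a. \<mu> x a - mu_star Gam x a))"
proof -
  have "best_loss \<omega> \<le> (\<Sum>i<n. loss pol g i \<mu> \<omega>)" for \<omega>
    unfolding best_loss_def
    by (rule cINF_lower[OF _ \<mu>]) (auto intro!: bdd_belowI[where m=0] sum_nonneg simp: loss_def)
  then have "integral\<^sup>L (Data n) best_loss \<le> (\<integral>\<omega>. (\<Sum>i<n. loss pol g i \<mu> \<omega>) \<partial>Data n)"
    using integrable_best_loss int_loss_F[OF _ \<mu>] by (intro integral_mono) auto
  also have "\<dots> = (\<Sum>i<n. integral\<^sup>L (Data n) (loss pol g i \<mu>))"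
    using int_loss_F[OF _ \<mu>] by (simp add: Bochner_Integration.integral_sum)
  also have "\<dots> = (\<Sum>i<n. integral\<^sup>L (Data n) (weighted_sq i (sigma_fn Gam))
      + integral\<^sup>L (Data n) (weighted_sq i (\<lambda>x a. \<mu> x a - mu_star Gam x a)))"
    using integral_loss_bias_variance[OF _ F_meas[OF \<mu>] int_loss_F[OF _ \<mu>]] int_sigma int_F_norm[OF _ \<mu>]
    by (intro sum.cong) (simp_all add: weighted_sq_def[abs_def])
  also have "\<dots> = real n * (wnorm2 Xi MA Gam pol g n (sigma_fn Gam)
      + wnorm2 Xi MA Gam pol g n (\<lambda>x a. \<mu> x a - mu_star Gam x a))"
    using n_pos by (simp add: wnorm2_eq sum.distrib algebra_simps)
  finally show ?thesis .
qed

lemma aipw_mse_le: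
  "integral\<^sup>L (Data n) (\<lambda>\<omega>. (aipw MA pol g n muhat \<omega> - \<tau>)\<^sup>2)
    \<le> (1 / real n) * (eff_var Xi MA Gam pol g n
         + (1 / real n) * integral\<^sup>L (Data n) (regret pol g n F muhat)
         + (INF \<mu>\<in>F. wnorm2 Xi MA Gam pol g n (\<lambda>x a. \<mu> x a - mu_star Gam x a)))"
proof -
  define V where "V = (\<integral>x. (target_fn x - \<tau>)\<^sup>2 \<partial>Xi)"
  define W where "W \<mu> = wnorm2 Xi MA Gam pol g n (\<lambda>x a. \<mu> x a - mu_star Gam x a)" for \<mu>
  define R where "R = integral\<^sup>L (Data n) (regret pol g n F muhat)"
  define E where "E = integral\<^sup>L (Data n) (\<lambda>\<omega>. (aipw MA pol g n muhat \<omega> - \<tau>)\<^sup>2)"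
  have eff_var: "eff_var Xi MA Gam pol g n = V + wnorm2 Xi MA Gam pol g n (sigma_fn Gam)"
    by (simp add: eff_var_def V_def target_fn_def)
  have "(real n)\<^sup>2 * E = (\<Sum>i<n. \<integral>\<omega>. (score i \<omega>)\<^sup>2 \<partial>Data n)"
    using n_pos by (simp add: E_def integral_aipw_sq_error)
  also have "\<dots> \<le> (\<Sum>i<n. (\<integral>\<omega>. (ipw_term i \<omega>)\<^sup>2 \<partial>Data n) + V)"
    by (intro sum_mono) (simp add: V_def integral_score_sq_le integrable_score_sq integrable_ipw_term_sq)
  also have "\<dots> = R + integral\<^sup>L (Data n) best_loss + real n * V"
    by (simp add: R_def sum.distrib sum_integral_ipw_term_sq)
  finally have bound: "(real n)\<^sup>2 * E \<le> R + integral\<^sup>L (Data n) best_loss + real n * V" .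
  have "real n * E - (eff_var Xi MA Gam pol g n + R / real n) \<le> W \<mu>" if \<mu>: "\<mu> \<in> F" for \<mu>
  proof -
    have "real n * (real n * E) \<le> real n * (R / real n + (eff_var Xi MA Gam pol g n + W \<mu>))"
      using bound integral_best_loss_le[OF \<mu>] n_pos
      by (simp add: eff_var W_def power2_eq_square distrib_left mult.assoc[symmetric])
    then show ?thesis using n_pos by (simp add: mult_le_cancel_left_pos)
  qed
  then have "real n * E - (eff_var Xi MA Gam pol g n + R / real n) \<le> (INF \<mu>\<in>F. W \<mu>)"
    by (rule cINF_greatest[OF F_ne])
  then show ?thesis using n_pos unfolding E_def[symmetric] R_def[symmetric] W_def[symmetric]
    by (simp add: field_simps)
qed

end

theorem theorem2:
  fixes Xi :: "'x measure" and MA :: "'a measure"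
    and Gam :: "'x \<Rightarrow> 'a \<Rightarrow> real measure"
    and pol :: "nat \<Rightarrow> 'x \<Rightarrow> ('x, 'a) hist \<Rightarrow> 'a \<Rightarrow> real"
    and g :: "'x \<Rightarrow> 'a \<Rightarrow> real"
    and F :: "('x \<Rightarrow> 'a \<Rightarrow> real) set"
    and muhat :: "nat \<Rightarrow> ('x, 'a) hist \<Rightarrow> 'x \<Rightarrow> 'a \<Rightarrow> real"
    and n :: nat
  defines "P \<equiv> data_law Xi MA Gam pol n"
  assumes n_pos: "0 < n"
    and Xi_prob: "prob_space Xi"
    and MA_sf: "sigma_finite_measure MA"
    and Gam_kernel: "(\<lambda>(x, a). Gam x a) \<in> Xi \<Otimes>\<^sub>M MA \<rightarrow>\<^sub>M prob_algebra (borel :: real measure)"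
    and Gam_var: "\<And>x a. x \<in> space Xi \<Longrightarrow> a \<in> space MA \<Longrightarrow> integrable (Gam x a) (\<lambda>y. y\<^sup>2)"
    and pi_meas: "\<And>i. i < n \<Longrightarrow>
       (\<lambda>(x, h, a). pol i x h a) \<in> Xi \<Otimes>\<^sub>M (histM Xi MA i \<Otimes>\<^sub>M MA) \<rightarrow>\<^sub>M borel"
    and pi_nonneg: "\<And>i x h a. i < n \<Longrightarrow> x \<in> space Xi \<Longrightarrow> h \<in> space (histM Xi MA i)
       \<Longrightarrow> a \<in> space MA \<Longrightarrow> 0 \<le> pol i x h a"
    and pi_dens: "\<And>i x h. i < n \<Longrightarrow> x \<in> space Xi \<Longrightarrow> h \<in> space (histM Xi MA i)
       \<Longrightarrow> (\<integral>\<^sup>+ a. ennreal (pol i x h a) \<partial>MA) = 1"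
    and overlap: "\<And>i x h a. i < n \<Longrightarrow> x \<in> space Xi \<Longrightarrow> h \<in> space (histM Xi MA i)
       \<Longrightarrow> a \<in> space MA \<Longrightarrow> g x a \<noteq> 0 \<Longrightarrow> 0 < pol i x h a"
    and g_meas: "(\<lambda>(x, a). g x a) \<in> borel_measurable (Xi \<Otimes>\<^sub>M MA)"
    and F_meas: "\<And>mu. mu \<in> F \<Longrightarrow> (\<lambda>(x, a). mu x a) \<in> borel_measurable (Xi \<Otimes>\<^sub>M MA)"
    and F_ne: "F \<noteq> {}"
    and muhat_meas: "\<And>i. i < n \<Longrightarrow>
       (\<lambda>(h, x, a). muhat i h x a) \<in> borel_measurable (histM Xi MA i \<Otimes>\<^sub>M (Xi \<Otimes>\<^sub>M MA))"
    \<comment> \<open>finiteness of all expectations / integrals that appear\<close>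
    and int_gmu: "\<And>x. x \<in> space Xi \<Longrightarrow> integrable MA (\<lambda>a. g x a * mu_star Gam x a)"
    and int_gmuhat: "\<And>i h x. i < n \<Longrightarrow> h \<in> space (histM Xi MA i) \<Longrightarrow> x \<in> space Xi
       \<Longrightarrow> integrable MA (\<lambda>a. g x a * muhat i h x a)"
    and int_target: "integrable Xi (\<lambda>x. (innerA MA (g x) (mu_star Gam x))\<^sup>2)"
    and int_sigma: "\<And>i. i < n \<Longrightarrow> integrable P (\<lambda>\<omega>. (g (Xo \<omega> i) (Ao \<omega> i))\<^sup>2
       * (sigma_fn Gam (Xo \<omega> i) (Ao \<omega> i))\<^sup>2 / (pol i (Xo \<omega> i) (past \<omega> i) (Ao \<omega> i))\<^sup>2)"
    and int_F_norm: "\<And>i mu. i < n \<Longrightarrow> mu \<in> F \<Longrightarrow> integrable P (\<lambda>\<omega>. (g (Xo \<omega> i) (Ao \<omega> i))\<^sup>2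
       * (mu (Xo \<omega> i) (Ao \<omega> i) - mu_star Gam (Xo \<omega> i) (Ao \<omega> i))\<^sup>2
       / (pol i (Xo \<omega> i) (past \<omega> i) (Ao \<omega> i))\<^sup>2)"
    and int_loss_F: "\<And>i mu. i < n \<Longrightarrow> mu \<in> F \<Longrightarrow> integrable P (loss pol g i mu)"
    and int_loss_hat: "\<And>i. i < n \<Longrightarrow> integrable P (\<lambda>\<omega>. loss pol g i (muhat i (past \<omega> i)) \<omega>)"
    and int_term1: "\<And>i. i < n \<Longrightarrow> integrable P (\<lambda>\<omega>.
       (g (Xo \<omega> i) (Ao \<omega> i) / pol i (Xo \<omega> i) (past \<omega> i) (Ao \<omega> i)
          * (Yo \<omega> i - muhat i (past \<omega> i) (Xo \<omega> i) (Ao \<omega> i)))\<^sup>2)"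
    and int_term2: "\<And>i. i < n \<Longrightarrow> integrable P (\<lambda>\<omega>.
       (innerA MA (g (Xo \<omega> i)) (muhat i (past \<omega> i) (Xo \<omega> i)))\<^sup>2)"
    and int_regret: "integrable P (regret pol g n F muhat)"
  shows "integral\<^sup>L P (\<lambda>\<omega>. (aipw MA pol g n muhat \<omega> - tau Xi MA Gam g)\<^sup>2)
    \<le> (1 / real n) * (eff_var Xi MA Gam pol g n
         + (1 / real n) * integral\<^sup>L P (regret pol g n F muhat)
         + (INF mu\<in>F. wnorm2 Xi MA Gam pol g n (\<lambda>x a. mu x a - mu_star Gam x a)))"
proof -
  have "adaptive_design Xi MA Gam pol g n"
    by (rule adaptive_design.intro[OF n_pos Xi_prob MA_sf Gam_kernel Gam_var pi_meas pi_nonneg pi_dens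
          overlap g_meas])
  then interpret aipw_regret_design Xi MA Gam pol g n muhat F
    by (intro aipw_regret_design.intro aipw_design.intro
        aipw_design_axioms.intro[OF muhat_meas int_gmu int_gmuhat int_target]
        aipw_regret_design_axioms.intro[OF F_meas F_ne int_sigma[unfolded P_def] int_F_norm[unfolded P_def]
          int_loss_F[unfolded P_def] int_term1[unfolded P_def] int_term2[unfolded P_def]
          int_regret[unfolded P_def]])
  show ?thesis unfolding P_def by (rule aipw_mse_le)
qed

end
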